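(* Let $k=2\kappa+1$ with $\kappa\in\{0,1,2,\dots\}$ and let $v\in C_p^{k+2}$. Then there exists a constant $C>0$, independent of $h$, such that for every $N\ge1$ (with $h=1/N$) $$\max_{1\le i\le N}\big|(\pi_1v-v,\ell_i)_{I_i}\big|\le C\,h^{k+3}\,\|v^{(k+2)}\|_\infty,\qquad I_i=(x_{i-1},x_i).$$
   Context: $C_p$ is the space of continuous $1$-periodic real functions, and $C_p^m$ the set of $f\in C_p$ with $f^{(j)}\in C_p$ for $j=1,\dots,m$; $\|\cdot\|_\infty$ is the sup norm. For $N\ge1$, $h=1/N$, $x_i=ih$. $\mathcal{V}_h^k=\{\phi\in C_p:\ \phi|_{[x_{i-1},x_i]}\text{ is a polynomial of degree}\le k,\ i=1,\dots,N\}$. Let $\mathcal{S}_h^2=\{\phi\in\mathcal{V}_h^k:\phi(x_i)=0\ \text{for all } i\}$, $\mathcal{S}_h^1$ its $L^2(0,1)$-orthogonal complement in $\mathcal{V}_h^k$, and $\pi_1$ the $L^2(0,1)$-orthogonal projection onto $\mathcal{S}_h^1$. $(f,g)_{I_i}=\int_{x_{i-1}}^{x_i}fg\,dx$. Let $\psi(x)=\frac{1}{k!}\frac{1}{x(1-x)}\frac{d^{k-1}}{dx^{k-1}}[x^{k+1}(1-x)^k]$ (a polynomial of degree $k$). For $i=1,\dots,N$, $\ell_i$ is the $1$-periodic function which on one period equals $\psi((x-x_{i-1})/h)$ on $[x_{i-1},x_i]$, $\psi((x_{i+1}-x)/h)$ on $[x_i,x_{i+1}]$, and $0$ elsewhere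 (node indices modulo $N$). *)

theory Defs
  imports "HOL-Analysis.Analysis" "HOL-Computational_Algebra.Polynomial"
begin

definition node :: "nat \<Rightarrow> int \<Rightarrow> real" where
  "node N i = real_of_int i / real N"

definition Cp :: "nat \<Rightarrow> (real \<Rightarrow> real) \<Rightarrow> bool" where
  "Cp m f \<longleftrightarrow> (\<forall>x. f (x + 1) = f x) \<and> continuous_on UNIV f \<and>
     (\<forall>j<m. \<forall>x. ((deriv ^^ j) f has_real_derivative (deriv ^^ Suc j) f x) (at x)) \<and>
     continuous_on UNIV ((deriv ^^ m) f)"

definition Vh :: "nat \<Rightarrow> nat \<Rightarrow> (real \<Rightarrow> real) set" where
  "Vh N k = {\<phi>. (\<forall>x. \<phi> (x + 1) = \<phi> x) \<and> continuous_on UNIV \<phi> \<and>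
     (\<forall>i\<in>{1..N}. \<exists>p::real poly. degree p \<le> k \<and>
        (\<forall>x\<in>{node N (int i - 1)..node N (int i)}. \<phi> x = poly p x))}"

definition Sh2 :: "nat \<Rightarrow> nat \<Rightarrow> (real \<Rightarrow> real) set" where
  "Sh2 N k = {\<phi>\<in>Vh N k. \<forall>i. \<phi> (node N i) = 0}"

definition Sh1 :: "nat \<Rightarrow> nat \<Rightarrow> (real \<Rightarrow> real) set" where
  "Sh1 N k = {\<phi>\<in>Vh N k. \<forall>g\<in>Sh2 N k. integral {0..1} (\<lambda>x. \<phi> x * g x) = 0}"

definition pi1 :: "nat \<Rightarrow> nat \<Rightarrow> (real \<Rightarrow> real) \<Rightarrow> (real \<Rightarrow> real)" where
  "pi1 N k v = (THE w. w \<in> Sh1 N k \<and>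
     (\<forall>\<phi>\<in>Sh1 N k. integral {0..1} (\<lambda>x. (v x - w x) * \<phi> x) = 0))"

text \<open>psi(x) = 1/k! * 1/(x(1-x)) * d^(k-1)/dx^(k-1) [x^(k+1) (1-x)^k] (exact polynomial division).\<close>
definition psi_poly :: "nat \<Rightarrow> real poly" where
  "psi_poly k = smult (1 / fact k)
     (((pderiv ^^ (k - 1)) ([:0, 1:] ^ (k + 1) * [:1, -1:] ^ k)) div [:0, 1, -1:])"

definition psi :: "nat \<Rightarrow> real \<Rightarrow> real" where
  "psi k x = poly (psi_poly k) x"

definition ell :: "nat \<Rightarrow> nat \<Rightarrow> nat \<Rightarrow> real \<Rightarrow> real" where
  "ell N k i x = (let h = 1 / real N; t = frac (x - node N (int i - 1)) in
     if t \<le> h then psi k (t / h)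
     else if t \<le> 2 * h then psi k ((2 * h - t) / h)
     else 0)"

definition supnorm :: "(real \<Rightarrow> real) \<Rightarrow> real" where
  "supnorm f = (SUP x. \<bar>f x\<bar>)"

end

theory Submission
  imports Defs
begin

text \<open>Since \<open>x (1 - x) \<psi>(x)\<close> is, up to \<open>1/k!\<close>, the \<open>(k - 1)\<close>-st derivative of
  \<open>x\<^sup>k\<^sup>+\<^sup>1 (1 - x)\<^sup>k\<close>, repeated integration by parts shows that \<open>\<psi>\<close> is orthogonal on \<open>[0, 1]\<close> to
  every polynomial of degree \<open>\<le> k\<close> vanishing at \<open>0\<close> and \<open>1\<close>. Consequently \<open>S\<^sub>h\<^sup>1\<close> is spanned by the
  \<open>\<ell>\<^sub>j\<close>, and \<open>\<pi>\<^sub>1 v = \<Sum>\<^sub>j c\<^sub>j \<ell>\<^sub>j\<close> where \<open>c\<close> solves a periodic three-term system with diagonal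
  \<open>2a\<close>, off-diagonal \<open>b\<close>, \<open>a = \<integral>\<psi>\<^sup>2 > |b|\<close>, \<open>b = \<integral>\<psi>(s)\<psi>(1 - s)\<close>.

  Writing \<open>e\<^sub>j = c\<^sub>j - v(x\<^sub>j)/\<psi>(1)\<close>, the right-hand sides of the system for \<open>e\<close> are the moments
  against \<open>\<psi>\<close> and \<open>\<psi>(1 - \<cdot>)\<close> of the error of interpolating \<open>v\<close> on an element by \<open>\<psi>\<close> and
  \<open>\<psi>(1 - \<cdot>)\<close>. These functionals vanish on polynomials of degree \<open>\<le> k\<close>, so by Taylor's theorem they
  equal \<open>\<mu> v\<^sup>(\<^sup>k\<^sup>+\<^sup>1\<^sup>)(x\<^sub>j) h\<^sup>k\<^sup>+\<^sup>1/(k + 1)! + O(h\<^sup>k\<^sup>+\<^sup>2)\<close>, with the same constant \<open>\<mu>\<close> for both weights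
  because \<open>k\<close> is odd. The leading terms form a sequence that varies by \<open>O(h\<^sup>k\<^sup>+\<^sup>2)\<close> from node to node;
  subtracting it and applying the discrete maximum principle of the diagonally dominant system
  bounds the relevant combination of \<open>e\<close> by \<open>O(h\<^sup>k\<^sup>+\<^sup>2)\<close>, and the moment over \<open>I\<^sub>i\<close> contributes
  the last factor \<open>h\<close>.\<close>

section \<open>Polynomials, integrals and Taylor's theorem\<close>

lemma higher_pderiv_power_mult:
  fixes X R :: "'a::field_char_0 poly"
  assumes "i \<le> n" and X: "pderiv X = 1" "poly X c = 0"
  shows "\<exists>R'. (pderiv ^^ i) (X ^ n * R) = X ^ (n - i) * R' \<and>
              poly R' c = fact n / fact (n - i) * poly R c"
  using assms(1)
proof (induction i)
  case 0
  show ?case by (intro exI[of _ R]) simp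
next
  case (Suc i)
  then obtain R' where R': "(pderiv ^^ i) (X ^ n * R) = X ^ (n - i) * R'"
    "poly R' c = fact n / fact (n - i) * poly R c" by auto
  define m where "m = n - Suc i"
  have m: "n - i = Suc m" using Suc.prems by (simp add: m_def)
  define R'' where "R'' = smult (of_nat (Suc m)) R' + X * pderiv R'"
  have "(pderiv ^^ Suc i) (X ^ n * R) = pderiv (X ^ Suc m * R')"
    using R'(1) m by simp
  also have "\<dots> = X ^ m * R''"
    by (simp only: pderiv_mult pderiv_power_Suc X R''_def) (simp add: algebra_simps)
  finally have "(pderiv ^^ Suc i) (X ^ n * R) = X ^ (n - Suc i) * R''"
    by (simp add: m_def)
  moreover have "poly R'' c = fact n / fact (n - Suc i) * poly R c"
    using R'(2) X(2) of_nat_neq_0[of m, where 'a='a] by (simp add: R''_def m flip: m_def)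
  ultimately show ?case by blast
qed

lemma poly_higher_pderiv_power_mult_eq_0:
  fixes X R :: "'a::field_char_0 poly"
  assumes "i < n" and "pderiv X = 1" and "poly X c = 0"
  shows "poly ((pderiv ^^ i) (X ^ n * R)) c = 0"
proof -
  obtain R' where "(pderiv ^^ i) (X ^ n * R) = X ^ (n - i) * R'"
    using higher_pderiv_power_mult[of i n X c R] assms by auto
  then show ?thesis using assms by (simp add: zero_power)
qed

lemma poly_higher_pderiv_power_mult_self:
  fixes X R :: "'a::field_char_0 poly"
  assumes "pderiv X = 1" and "poly X c = 0"
  shows "poly ((pderiv ^^ n) (X ^ n * R)) c = fact n * poly R c"
  using higher_pderiv_power_mult[of n n X c R] assms by auto

lemma higher_pderiv_eq_0:
  fixes p :: "'a::{comm_semiring_1,semiring_no_zero_divisors,semiring_char_0} poly"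
  assumes "degree p < j"
  shows "(pderiv ^^ j) p = 0"
  using assms by (intro poly_eqI) (simp add: coeff_higher_pderiv coeff_eq_0)

lemma integral_pderiv_mult_poly:
  fixes p q :: "real poly"
  assumes "a \<le> b"
  shows "integral {a..b} (\<lambda>x. poly (pderiv p) x * poly q x) =
     poly p b * poly q b - poly p a * poly q a - integral {a..b} (\<lambda>x. poly p x * poly (pderiv q) x)"
proof -
  have "((\<lambda>x. poly (pderiv (p * q)) x) has_integral poly (p * q) b - poly (p * q) a) {a..b}"
    using assms poly_DERIV[of "p * q"]
    by (intro fundamental_theorem_of_calculus)
       (auto simp: has_real_derivative_iff_has_vector_derivative intro: has_vector_derivative_at_within)
  then have "integral {a..b} (\<lambda>x. poly p x * poly (pderiv q) x + poly (pderiv p) x * poly q x) =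
      poly p b * poly q b - poly p a * poly q a"
    by (simp add: integral_unique pderiv_mult mult.commute)
  moreover have "integral {a..b} (\<lambda>x. poly p x * poly (pderiv q) x + poly (pderiv p) x * poly q x) =
      integral {a..b} (\<lambda>x. poly p x * poly (pderiv q) x) + integral {a..b} (\<lambda>x. poly (pderiv p) x * poly q x)"
    by (intro integral_add integrable_continuous_interval continuous_intros)
  ultimately show ?thesis by simp
qed

lemma integral_higher_pderiv_mult_poly:
  fixes p q :: "real poly"
  assumes "a \<le> b"
    and "\<And>i. i < j \<Longrightarrow> poly ((pderiv ^^ i) p) a = 0 \<and> poly ((pderiv ^^ i) p) b = 0"
  shows "integral {a..b} (\<lambda>x. poly ((pderiv ^^ j) p) x * poly q x) =
     (-1) ^ j * integral {a..b} (\<lambda>x. poly p x * poly ((pderiv ^^ j) q) x)"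
  using assms(2)
proof (induction j arbitrary: q)
  case 0
  then show ?case by simp
next
  case (Suc j)
  have "integral {a..b} (\<lambda>x. poly ((pderiv ^^ Suc j) p) x * poly q x)
      = - integral {a..b} (\<lambda>x. poly ((pderiv ^^ j) p) x * poly (pderiv q) x)"
    using integral_pderiv_mult_poly[OF assms(1), of "(pderiv ^^ j) p" q] Suc.prems by simp
  also have "\<dots> = - ((-1) ^ j * integral {a..b} (\<lambda>x. poly p x * poly ((pderiv ^^ Suc j) q) x))"
    using Suc.IH[of "pderiv q"] Suc.prems by (simp del: funpow.simps add: funpow_Suc_right)
  finally show ?case by simp
qed

lemma integral_reflect_interval:
  "integral {a..b} (\<lambda>s. f (a + b - s)) = integral {a..b::real} f"
proof -
  have "(\<lambda>s. f (a + b - s)) = (\<lambda>x. f (- x)) \<circ> (+) (- (a + b))"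
    by (rule ext) (simp add: o_def add.commute)
  then have "integral {a..b} (\<lambda>s. f (a + b - s)) = integral {- b..- a} (\<lambda>x. f (- x))"
    using integral_shift_Icc_real[of a b "\<lambda>x. f (- x)" "- (a + b)"] by simp
  also have "\<dots> = integral {a..b} f"
    by (rule Henstock_Kurzweil_Integration.integral_reflect_real)
  finally show ?thesis .
qed

lemma continuous_integral_square_eq_0:
  fixes g :: "real \<Rightarrow> real"
  assumes "continuous_on {a..b} g" "a < b" "integral {a..b} (\<lambda>x. g x * g x) = 0" "x \<in> {a..b}"
  shows "g x = 0"
proof -
  have c: "continuous_on (cbox a b) (\<lambda>x. g x * g x)"
    using assms(1) by (auto intro!: continuous_intros)
  have int0: "((\<lambda>x. g x * g x) has_integral 0) (cbox a b)"
    using integrable_integral[OF integrable_continuous[OF c]] assms(3) by simp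
  have "g x * g x = 0"
    by (rule has_integral_0_cbox_imp_0[OF c _ int0]) (use assms(2,4) in simp_all)
  then show ?thesis by simp
qed

lemma taylor_remainder_bound:
  fixes g :: "real \<Rightarrow> real"
  assumes "n > 0"
    and der: "\<And>j x. j < n \<Longrightarrow> ((deriv ^^ j) g has_real_derivative (deriv ^^ Suc j) g x) (at x)"
    and bnd: "\<And>x. \<bar>(deriv ^^ n) g x\<bar> \<le> S" and "t \<ge> 0"
  shows "\<bar>g (y + t) - (\<Sum>j<n. (deriv ^^ j) g y / fact j * t ^ j)\<bar> \<le> S * t ^ n / fact n"
proof (cases "t = 0")
  case True
  have "S \<ge> 0" using bnd by (meson abs_ge_zero order_trans)
  moreover have "(\<Sum>j<n. (deriv ^^ j) g y / fact j * t ^ j) = g y"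
    using \<open>n > 0\<close> True by (simp add: zero_power sum.lessThan_Suc_shift gr0_conv_Suc)
  ultimately show ?thesis using True \<open>n > 0\<close> by simp
next
  case False
  obtain \<tau> where "g (y + t) = (\<Sum>j<n. (deriv ^^ j) g y / fact j * (y + t - y) ^ j)
      + (deriv ^^ n) g \<tau> / fact n * (y + t - y) ^ n"
    using Taylor_up[where diff = "\<lambda>j. (deriv ^^ j) g" and a = y and c = y and b = "y + t" and n = n and f = g]
      \<open>n > 0\<close> der False \<open>t \<ge> 0\<close> by force
  moreover have "\<bar>(deriv ^^ n) g \<tau> / fact n * t ^ n\<bar> \<le> S * t ^ n / fact n"
    using bnd \<open>t \<ge> 0\<close> by (simp add: abs_mult divide_right_mono mult_right_mono)
  ultimately show ?thesis by simp
qed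

definition taylor_poly :: "(real \<Rightarrow> real) \<Rightarrow> real \<Rightarrow> real \<Rightarrow> nat \<Rightarrow> real poly" where
  "taylor_poly g y h n = (\<Sum>j<n. monom ((deriv ^^ j) g y / fact j * h ^ j) j)"

lemma degree_taylor_poly: "degree (taylor_poly g y h (Suc n)) \<le> n"
  unfolding taylor_poly_def by (rule degree_sum_le) (auto intro: order_trans[OF degree_monom_le])

lemma poly_taylor_poly: "poly (taylor_poly g y h n) s = (\<Sum>j<n. (deriv ^^ j) g y / fact j * (h * s) ^ j)"
  by (simp add: taylor_poly_def poly_sum poly_monom power_mult_distrib mult_ac)

lemma taylor_poly_remainder_bound:
  fixes g :: "real \<Rightarrow> real"
  assumes "n > 0"
    and der: "\<And>j x. j < n \<Longrightarrow> ((deriv ^^ j) g has_real_derivative (deriv ^^ Suc j) g x) (at x)"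
    and bnd: "\<And>x. \<bar>(deriv ^^ n) g x\<bar> \<le> S" and "h \<ge> 0" "s \<in> {0..1}"
  shows "\<bar>g (y + h * s) - poly (taylor_poly g y h n) s\<bar> \<le> S * h ^ n / fact n"
proof -
  have "\<bar>g (y + h * s) - poly (taylor_poly g y h n) s\<bar> \<le> S * (h * s) ^ n / fact n"
    unfolding poly_taylor_poly using assms by (intro taylor_remainder_bound der bnd) auto
  also have "\<dots> \<le> S * h ^ n / fact n"
  proof -
    have "S \<ge> 0" using bnd by (meson abs_ge_zero order_trans)
    moreover have "(h * s) ^ n \<le> h ^ n"
      using assms(4,5) by (intro power_mono) (auto simp: mult_left_le)
    ultimately show ?thesis by (intro divide_right_mono mult_left_mono) auto
  qed
  finally show ?thesis .
qed

section \<open>The shape function \<open>\<psi>\<close>\<close>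

definition rodrigues_poly :: "nat \<Rightarrow> real poly" where
  "rodrigues_poly k = [:0, 1:] ^ (k + 1) * [:1, -1:] ^ k"

definition psi_numerator :: "nat \<Rightarrow> real poly" where
  "psi_numerator k = (pderiv ^^ (k - 1)) (rodrigues_poly k)"

definition bubble_poly :: "real poly" where
  "bubble_poly = [:0, 1, -1:]"

lemma psi_poly_eq: "psi_poly k = smult (1 / fact k) (psi_numerator k div bubble_poly)"
  unfolding psi_poly_def psi_numerator_def rodrigues_poly_def bubble_poly_def ..

lemma poly_bubble_poly: "poly bubble_poly x = x * (1 - x)"
  by (simp add: bubble_poly_def algebra_simps)

lemma degree_rodrigues_poly: "degree (rodrigues_poly k) = 2 * k + 1"
  unfolding rodrigues_poly_def by (subst degree_mult_eq) (simp_all add: degree_power_eq)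

lemma rodrigues_poly_reflected: "rodrigues_poly k = [:-1, 1:] ^ k * smult ((-1) ^ k) ([:0, 1:] ^ (k + 1))"
proof -
  have "[:1, -1:] = smult (-1) [:-1, 1::real:]"
    by simp
  then have "[:1, -1:] ^ k = smult ((-1) ^ k) ([:-1, 1::real:] ^ k)"
    by (simp only: smult_power)
  then show ?thesis
    unfolding rodrigues_poly_def by (metis mult.commute mult_smult_left mult_smult_right)
qed

lemma poly_higher_pderiv_rodrigues_poly_0:
  "i \<le> k \<Longrightarrow> poly ((pderiv ^^ i) (rodrigues_poly k)) 0 = 0"
  unfolding rodrigues_poly_def by (rule poly_higher_pderiv_power_mult_eq_0) (simp_all add: pderiv_pCons)

lemma poly_higher_pderiv_rodrigues_poly_1:
  "i < k \<Longrightarrow> poly ((pderiv ^^ i) (rodrigues_poly k)) 1 = 0"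
  unfolding rodrigues_poly_reflected
  by (rule poly_higher_pderiv_power_mult_eq_0) (simp_all add: pderiv_pCons)

lemma poly_higher_pderiv_rodrigues_poly_1_self:
  "poly ((pderiv ^^ k) (rodrigues_poly k)) 1 \<noteq> 0"
  unfolding rodrigues_poly_reflected
  by (subst poly_higher_pderiv_power_mult_self) (simp_all add: pderiv_pCons)

lemma integral_psi_numerator_mult_eq_0:
  assumes "k \<ge> 1" and "degree r < k - 1"
  shows "integral {0..1} (\<lambda>x. poly (psi_numerator k) x * poly r x) = 0"
proof -
  have "integral {0..1} (\<lambda>x. poly (psi_numerator k) x * poly r x) =
      (-1) ^ (k - 1) * integral {0..1} (\<lambda>x. poly (rodrigues_poly k) x * poly ((pderiv ^^ (k - 1)) r) x)"
    unfolding psi_numerator_def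
    by (rule integral_higher_pderiv_mult_poly)
       (simp_all add: poly_higher_pderiv_rodrigues_poly_0 poly_higher_pderiv_rodrigues_poly_1)
  then show ?thesis using higher_pderiv_eq_0[OF assms(2)] by simp
qed

lemma bubble_poly_dvdI:
  assumes "poly q 0 = 0" and "poly q 1 = 0"
  shows "bubble_poly dvd q"
proof -
  obtain q1 where q1: "q = [:0, 1:] * q1"
    using assms(1) poly_eq_0_iff_dvd[of q 0] by (auto elim: dvdE)
  then obtain q2 where "q1 = [:-1, 1:] * q2"
    using assms(2) poly_eq_0_iff_dvd[of q1 1] by (auto elim: dvdE)
  with q1 have "q = bubble_poly * (- q2)"
    by (simp add: bubble_poly_def algebra_simps)
  then show ?thesis by (rule dvdI)
qed

lemma bubble_poly_mult_psi_poly: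
  assumes "k \<ge> 1"
  shows "bubble_poly * psi_poly k = smult (1 / fact k) (psi_numerator k)"
proof -
  have "bubble_poly dvd psi_numerator k"
    using assms by (intro bubble_poly_dvdI)
      (simp_all add: psi_numerator_def poly_higher_pderiv_rodrigues_poly_0 poly_higher_pderiv_rodrigues_poly_1)
  then show ?thesis by (simp add: psi_poly_eq mult_smult_right)
qed

lemma pderiv_psi_numerator:
  "k \<ge> 1 \<Longrightarrow> pderiv (psi_numerator k) = (pderiv ^^ k) (rodrigues_poly k)"
  by (cases k) (simp_all add: psi_numerator_def)

text \<open>Differentiating \<open>x (1 - x) \<psi>(x)\<close> at the endpoints isolates \<open>\<psi>(0)\<close> and \<open>\<psi>(1)\<close>.\<close>

lemma poly_pderiv_bubble_poly_mult:
  "poly (pderiv (bubble_poly * p)) x = (1 - 2 * x) * poly p x + x * (1 - x) * poly (pderiv p) x"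
proof -
  have "pderiv bubble_poly = [:1, -2:]" by (simp add: bubble_poly_def pderiv_pCons)
  then show ?thesis by (simp add: pderiv_mult poly_bubble_poly algebra_simps)
qed

lemma psi_0:
  assumes "k \<ge> 1"
  shows "psi k 0 = 0"
proof -
  have "psi k 0 = poly (pderiv (bubble_poly * psi_poly k)) 0"
    by (simp add: psi_def poly_pderiv_bubble_poly_mult)
  also have "\<dots> = poly ((pderiv ^^ k) (rodrigues_poly k)) 0 / fact k"
    using assms by (simp add: bubble_poly_mult_psi_poly pderiv_smult pderiv_psi_numerator)
  finally show ?thesis by (simp add: poly_higher_pderiv_rodrigues_poly_0)
qed

lemma psi_1_neq_0:
  assumes "k \<ge> 1"
  shows "psi k 1 \<noteq> 0"
proof -
  have "- psi k 1 = poly (pderiv (bubble_poly * psi_poly k)) 1"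
    by (simp add: psi_def poly_pderiv_bubble_poly_mult)
  also have "\<dots> = poly ((pderiv ^^ k) (rodrigues_poly k)) 1 / fact k"
    using assms by (simp add: bubble_poly_mult_psi_poly pderiv_smult pderiv_psi_numerator)
  finally show ?thesis using poly_higher_pderiv_rodrigues_poly_1_self[of k] by auto
qed

lemma degree_psi_poly:
  assumes "k \<ge> 1"
  shows "degree (psi_poly k) = k"
proof -
  have "psi_poly k \<noteq> 0" using psi_1_neq_0[OF assms] by (auto simp: psi_def)
  then have "degree (bubble_poly * psi_poly k) = 2 + degree (psi_poly k)"
    by (subst degree_mult_eq) (simp_all add: bubble_poly_def)
  moreover have "degree (psi_numerator k) = k + 2"
    using assms by (simp add: psi_numerator_def degree_higher_pderiv degree_rodrigues_poly)
  ultimately show ?thesis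
    using bubble_poly_mult_psi_poly[OF assms] by simp
qed

lemma integral_poly_mult_psi_eq_0:
  assumes k: "k \<ge> 1" and q: "degree q \<le> k" "poly q 0 = 0" "poly q 1 = 0"
  shows "integral {0..1} (\<lambda>s. poly q s * psi k s) = 0"
proof -
  define r where "r = q div bubble_poly"
  have qr: "q = bubble_poly * r"
    using bubble_poly_dvdI[OF q(2,3)] by (simp add: r_def)
  have "poly q s * psi k s = poly (bubble_poly * psi_poly k) s * poly r s" for s
    by (simp add: qr psi_def)
  then have "integral {0..1} (\<lambda>s. poly q s * psi k s) =
      integral {0..1} (\<lambda>s. poly (psi_numerator k) s * poly r s) / fact k"
    by (simp add: bubble_poly_mult_psi_poly[OF k])
  also have "\<dots> = 0"
  proof (cases "r = 0")
    case False
    then have "degree q = 2 + degree r"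
      unfolding qr by (subst degree_mult_eq) (simp_all add: bubble_poly_def)
    then show ?thesis using integral_psi_numerator_mult_eq_0[OF k] q(1) by simp
  qed simp
  finally show ?thesis .
qed

lemma integral_poly_mult_psi_reflected_eq_0:
  assumes k: "k \<ge> 1" and q: "degree q \<le> k" "poly q 0 = 0" "poly q 1 = 0"
  shows "integral {0..1} (\<lambda>s. poly q s * psi k (1 - s)) = 0"
proof -
  define q' where "q' = pcompose q [:1, -1:]"
  have q': "poly q' s = poly q (1 - s)" for s
    by (simp add: q'_def poly_pcompose)
  have "integral {0..1} (\<lambda>s. poly q s * psi k (1 - s)) = integral {0..1} (\<lambda>s. poly q' s * psi k s)"
    using integral_reflect_interval[of 0 1 "\<lambda>s. poly q s * psi k (1 - s)"] by (simp add: q')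
  also have "\<dots> = 0"
    using k q by (intro integral_poly_mult_psi_eq_0) (simp_all add: q' poly_pcompose q'_def degree_pcompose)
  finally show ?thesis .
qed

definition psi_mass :: "nat \<Rightarrow> real" where
  "psi_mass k = integral {0..1} (\<lambda>s. psi k s * psi k s)"

definition psi_cross_mass :: "nat \<Rightarrow> real" where
  "psi_cross_mass k = integral {0..1} (\<lambda>s. psi k s * psi k (1 - s))"

lemma continuous_on_psi [continuous_intros]:
  "continuous_on S g \<Longrightarrow> continuous_on S (\<lambda>x. psi k (g x))"
  unfolding psi_def by (intro continuous_intros)

lemma psi_bounded:
  obtains P where "P > 0" "\<forall>s\<in>{0..1}. \<bar>psi k s\<bar> \<le> P"
proof -
  have "compact (psi k ` {0..1})"
    by (intro compact_continuous_image continuous_intros) simp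
  then obtain B where "\<forall>y\<in>psi k ` {0..1}. \<bar>y\<bar> \<le> B"
    using compact_imp_bounded bounded_iff by (metis real_norm_def)
  then show ?thesis by (intro that[of "max B 1"]) auto
qed

lemma psi_reflected_mass: "integral {0..1} (\<lambda>s. psi k (1 - s) * psi k (1 - s)) = psi_mass k"
  using integral_reflect_interval[of 0 1 "\<lambda>s. psi k s * psi k s"] by (simp add: psi_mass_def)

text \<open>Strict Cauchy-Schwarz: \<open>\<psi>(s) \<plusminus> \<psi>(1 - s)\<close> does not vanish at \<open>s = 0\<close>.\<close>

lemma abs_psi_cross_mass_less:
  assumes k: "k \<ge> 1"
  shows "\<bar>psi_cross_mass k\<bar> < psi_mass k"
proof -
  have pos: "integral {0..1} (\<lambda>s. (psi k s + \<sigma> * psi k (1 - s)) * (psi k s + \<sigma> * psi k (1 - s))) > 0"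
    if "\<sigma> \<in> {-1, 1}" for \<sigma> :: real
  proof -
    let ?g = "\<lambda>s. psi k s + \<sigma> * psi k (1 - s)"
    have cont: "continuous_on {0..1} ?g" by (intro continuous_intros)
    have "?g 0 \<noteq> 0" using that psi_0[OF k] psi_1_neq_0[OF k] by auto
    then have "integral {0..1} (\<lambda>s. ?g s * ?g s) \<noteq> 0"
      using continuous_integral_square_eq_0[OF cont, of 0] by auto
    moreover have "integral {0..1} (\<lambda>s. ?g s * ?g s) \<ge> 0"
      using cont by (intro integral_nonneg integrable_continuous_interval continuous_intros) simp_all
    ultimately show ?thesis by simp
  qed
  have expand: "integral {0..1} (\<lambda>s. (psi k s + \<sigma> * psi k (1 - s)) * (psi k s + \<sigma> * psi k (1 - s))) =
      2 * psi_mass k + 2 * \<sigma> * psi_cross_mass k" if "\<sigma> \<in> {-1, 1}" for \<sigma> :: real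
  proof -
    have "(\<lambda>s. (psi k s + \<sigma> * psi k (1 - s)) * (psi k s + \<sigma> * psi k (1 - s))) =
        (\<lambda>s. (psi k s * psi k s + psi k (1 - s) * psi k (1 - s)) + (2 * \<sigma>) * (psi k s * psi k (1 - s)))"
      using that by (auto simp: fun_eq_iff algebra_simps)
    then show ?thesis
      by (simp add: integral_add integral_mult_right integrable_continuous_interval continuous_intros
          psi_reflected_mass psi_mass_def psi_cross_mass_def)
  qed
  show ?thesis using pos[of 1] pos[of "-1"] expand[of 1] expand[of "-1"] by simp
qed

section \<open>The interpolation defect\<close>

text \<open>As \<open>\<psi>(0) = 0\<close>, \<open>psi_interp k f\<close> is the combination of \<open>\<psi>\<close> and \<open>\<psi>(1 - \<cdot>)\<close> that interpolates
  \<open>f\<close> at \<open>0\<close> and \<open>1\<close>.\<close>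

definition psi_interp :: "nat \<Rightarrow> (real \<Rightarrow> real) \<Rightarrow> real \<Rightarrow> real" where
  "psi_interp k f s = (f 1 * psi k s + f 0 * psi k (1 - s)) / psi k 1"

definition interp_defect :: "nat \<Rightarrow> (real \<Rightarrow> real) \<Rightarrow> (real \<Rightarrow> real) \<Rightarrow> real" where
  "interp_defect k w f = integral {0..1} (\<lambda>s. (f s - psi_interp k f s) * w s)"

lemma interp_defect_poly:
  assumes k: "k \<ge> 1" and p: "degree p \<le> k" and w: "w = psi k \<or> w = (\<lambda>s. psi k (1 - s))"
  shows "interp_defect k w (poly p) = 0"
proof -
  define q where "q = p - smult (poly p 1 / psi k 1) (psi_poly k)
      - smult (poly p 0 / psi k 1) (pcompose (psi_poly k) [:1, -1:])"
  have q: "poly q s = poly p s - psi_interp k (poly p) s" for s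
    by (simp add: q_def psi_interp_def psi_def poly_pcompose add_divide_distrib)
  have "degree q \<le> k"
    unfolding q_def using p degree_psi_poly[OF k]
    by (intro degree_diff_le) (auto simp: degree_pcompose)
  moreover have "poly q 0 = 0" "poly q 1 = 0"
    using psi_0[OF k] psi_1_neq_0[OF k] by (simp_all add: q psi_interp_def)
  ultimately show ?thesis
    using w integral_poly_mult_psi_eq_0[OF k] integral_poly_mult_psi_reflected_eq_0[OF k]
    by (auto simp: interp_defect_def simp flip: q)
qed

lemma interp_defect_eq:
  assumes "k \<ge> 1" "continuous_on {0..1} f" "continuous_on {0..1} w"
  shows "interp_defect k w f = integral {0..1} (\<lambda>s. f s * w s)
     - f 1 / psi k 1 * integral {0..1} (\<lambda>s. psi k s * w s)
     - f 0 / psi k 1 * integral {0..1} (\<lambda>s. psi k (1 - s) * w s)"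
proof -
  have "(\<lambda>s. (f s - psi_interp k f s) * w s) = (\<lambda>s. f s * w s
      - f 1 / psi k 1 * (psi k s * w s) - f 0 / psi k 1 * (psi k (1 - s) * w s))"
    by (auto simp: fun_eq_iff psi_interp_def algebra_simps add_divide_distrib)
  then show ?thesis
    unfolding interp_defect_def using assms psi_1_neq_0[OF assms(1)]
    by (simp add: integral_diff integrable_continuous_interval continuous_intros)
qed

lemma interp_defect_add_scaled:
  assumes "k \<ge> 1" "continuous_on {0..1} f" "continuous_on {0..1} g" "continuous_on {0..1} w"
  shows "interp_defect k w (\<lambda>s. f s + c * g s) = interp_defect k w f + c * interp_defect k w g"
proof -
  have "integral {0..1} (\<lambda>s. (f s + c * g s) * w s) =
      integral {0..1} (\<lambda>s. f s * w s) + c * integral {0..1} (\<lambda>s. g s * w s)"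
    using assms
    by (simp add: distrib_right mult.assoc integral_add integrable_continuous_interval continuous_intros)
  then show ?thesis
    using assms by (simp add: interp_defect_eq continuous_intros add_divide_distrib algebra_simps)
qed

lemma interp_defect_bound:
  assumes "k \<ge> 1" "continuous_on {0..1} f" "continuous_on {0..1} w"
    and "\<forall>s\<in>{0..1}. \<bar>f s\<bar> \<le> B" "\<forall>s\<in>{0..1}. \<bar>w s\<bar> \<le> W" "\<forall>s\<in>{0..1}. \<bar>psi k s\<bar> \<le> P"
  shows "\<bar>interp_defect k w f\<bar> \<le> (1 + 2 * P / \<bar>psi k 1\<bar>) * W * B"
proof -
  have B: "B \<ge> 0" and P: "P \<ge> 0" using assms(4,6) by (meson abs_ge_zero atLeastAtMost_iff order_trans zero_le_one order_refl)+
  have "\<bar>(f s - psi_interp k f s) * w s\<bar> \<le> (1 + 2 * P / \<bar>psi k 1\<bar>) * W * B"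
    if s: "s \<in> {0..1}" for s
  proof -
    have "\<bar>f 1 * psi k s + f 0 * psi k (1 - s)\<bar> \<le> B * P + B * P"
      using assms(4,6) s by (intro abs_triangle_ineq[THEN order_trans] add_mono)
        (auto simp: abs_mult intro!: mult_mono)
    then have "\<bar>psi_interp k f s\<bar> \<le> (B * P + B * P) / \<bar>psi k 1\<bar>"
      unfolding psi_interp_def abs_divide by (rule divide_right_mono) simp
    then have "\<bar>f s - psi_interp k f s\<bar> \<le> B + (B * P + B * P) / \<bar>psi k 1\<bar>"
      using assms(4) s by (intro abs_triangle_ineq4[THEN order_trans] add_mono) auto
    also have "\<dots> = (1 + 2 * P / \<bar>psi k 1\<bar>) * B"
      by (simp add: algebra_simps add_divide_distrib)
    finally have "\<bar>f s - psi_interp k f s\<bar> \<le> (1 + 2 * P / \<bar>psi k 1\<bar>) * B" .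
    then have "\<bar>f s - psi_interp k f s\<bar> * \<bar>w s\<bar> \<le> ((1 + 2 * P / \<bar>psi k 1\<bar>) * B) * W"
      using assms(5) s by (intro mult_mono) auto
    then show ?thesis by (simp add: abs_mult mult_ac)
  qed
  then have "norm (interp_defect k w f) \<le> (1 + 2 * P / \<bar>psi k 1\<bar>) * W * B * (1 - 0)"
    unfolding interp_defect_def using assms(2,3) psi_1_neq_0[OF assms(1)]
    by (intro integral_bound) (auto simp: psi_interp_def intro!: continuous_intros)
  then show ?thesis by simp
qed

lemma interp_defect_reflect:
  "interp_defect k (\<lambda>s. psi k (1 - s)) f = interp_defect k (psi k) (\<lambda>s. f (1 - s))"
  unfolding interp_defect_def psi_interp_def
  using integral_reflect_interval[of 0 1 "\<lambda>s. (f s - (f 1 * psi k s + f 0 * psi k (1 - s)) / psi k 1) * psi k (1 - s)"]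
  by (simp add: algebra_simps)

text \<open>For odd \<open>k\<close> the leading terms of \<open>(1 - s)\<^sup>k\<^sup>+\<^sup>1\<close> and \<open>s\<^sup>k\<^sup>+\<^sup>1\<close> cancel, so their difference
  is annihilated by the defect.\<close>

lemma interp_defect_monomial_reflect:
  assumes k: "k \<ge> 1" and "odd k"
  shows "interp_defect k (\<lambda>s. psi k (1 - s)) (\<lambda>s. s ^ (k + 1)) = interp_defect k (psi k) (\<lambda>s. s ^ (k + 1))"
proof -
  define d where "d = [:1, -1:] ^ (k + 1) - [:0, 1::real:] ^ (k + 1)"
  have d: "poly d s = (1 - s) ^ (k + 1) - s ^ (k + 1)" for s
    by (simp add: d_def poly_power algebra_simps)
  have "degree d \<le> k"
  proof (rule degree_le)
    have deg: "degree ([:1, -1::real:] ^ (k + 1)) = k + 1" "degree ([:0, 1::real:] ^ (k + 1)) = k + 1"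
      by (subst degree_power_eq; simp)+
    have "coeff d (k + 1) = lead_coeff ([:1, -1::real:] ^ (k + 1)) - lead_coeff ([:0, 1::real:] ^ (k + 1))"
      unfolding d_def coeff_diff deg ..
    also have "\<dots> = 0"
      unfolding lead_coeff_power using \<open>odd k\<close> by simp
    finally have "coeff d (k + 1) = 0" .
    moreover have "coeff d i = 0" if "i > k + 1" for i
      using that deg by (simp add: d_def coeff_eq_0)
    ultimately show "\<forall>i>k. coeff d i = 0"
      by (metis Suc_eq_plus1 Suc_lessI)
  qed
  have "interp_defect k (\<lambda>s. psi k (1 - s)) (\<lambda>s. s ^ (k + 1)) =
      interp_defect k (psi k) (\<lambda>s. s ^ (k + 1) + 1 * poly d s)"
    by (simp add: interp_defect_reflect d)
  also have "\<dots> = interp_defect k (psi k) (\<lambda>s. s ^ (k + 1))"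
    using interp_defect_poly[OF k \<open>degree d \<le> k\<close>]
    by (subst interp_defect_add_scaled[OF k]) (auto intro!: continuous_intros)
  finally show ?thesis .
qed

lemma interp_defect_taylor:
  fixes g :: "real \<Rightarrow> real"
  assumes k: "k \<ge> 1" and w: "w = psi k \<or> w = (\<lambda>s. psi k (1 - s))"
    and der: "\<And>j x. j < k + 2 \<Longrightarrow> ((deriv ^^ j) g has_real_derivative (deriv ^^ Suc j) g x) (at x)"
    and bnd: "\<And>x. \<bar>(deriv ^^ (k + 2)) g x\<bar> \<le> S" and "h \<ge> 0"
    and P: "\<forall>s\<in>{0..1}. \<bar>psi k s\<bar> \<le> P"
  shows "\<bar>interp_defect k w (\<lambda>s. g (y + h * s))
      - interp_defect k w (\<lambda>s. s ^ (k + 1)) * ((deriv ^^ (k + 1)) g y / fact (k + 1) * h ^ (k + 1))\<bar>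
    \<le> (1 + 2 * P / \<bar>psi k 1\<bar>) * P * (S * h ^ (k + 2) / fact (k + 2))"
proof -
  define T where "T = taylor_poly g y h (k + 1)"
  define c where "c = (deriv ^^ (k + 1)) g y / fact (k + 1) * h ^ (k + 1)"
  define R where "R s = g (y + h * s) - poly T s - c * s ^ (k + 1)" for s
  have "continuous_on UNIV g"
    using der[of 0] by (auto intro: DERIV_continuous continuous_at_imp_continuous_on)
  then have cont: "continuous_on {0..1} (\<lambda>s. g (y + h * s))" "continuous_on {0..1} R"
    unfolding R_def by (auto intro!: continuous_intros continuous_on_compose2[of UNIV g])
  have cw: "continuous_on {0..1} w" and wP: "\<forall>s\<in>{0..1}. \<bar>w s\<bar> \<le> P"
    using w P by (auto intro!: continuous_intros)
  have "poly (taylor_poly g y h (k + 2)) s = poly T s + c * s ^ (k + 1)" for s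
    by (simp add: T_def c_def poly_taylor_poly power_mult_distrib mult_ac)
  then have "\<bar>R s\<bar> \<le> S * h ^ (k + 2) / fact (k + 2)" if "s \<in> {0..1}" for s
    using taylor_poly_remainder_bound[OF _ der bnd \<open>h \<ge> 0\<close> that, where y=y] by (simp add: R_def diff_diff_eq)
  then have "\<bar>interp_defect k w R\<bar> \<le> (1 + 2 * P / \<bar>psi k 1\<bar>) * P * (S * h ^ (k + 2) / fact (k + 2))"
    using interp_defect_bound[OF k cont(2) cw _ wP P] by blast
  moreover have "interp_defect k w (\<lambda>s. g (y + h * s)) = interp_defect k w (\<lambda>s. s ^ (k + 1)) * c + interp_defect k w R"
  proof -
    have "interp_defect k w (\<lambda>s. g (y + h * s)) = interp_defect k w (\<lambda>s. (poly T s + c * s ^ (k + 1)) + 1 * R s)"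
      by (simp add: R_def)
    also have "\<dots> = interp_defect k w (\<lambda>s. poly T s + c * s ^ (k + 1)) + 1 * interp_defect k w R"
      by (rule interp_defect_add_scaled[OF k _ cont(2) cw]) (intro continuous_intros)
    also have "interp_defect k w (\<lambda>s. poly T s + c * s ^ (k + 1)) =
        interp_defect k w (poly T) + c * interp_defect k w (\<lambda>s. s ^ (k + 1))"
      by (rule interp_defect_add_scaled[OF k _ _ cw]) (intro continuous_intros)+
    finally show ?thesis
      using interp_defect_poly[OF k _ w, of T] degree_taylor_poly[of g y h k] by (simp add: T_def)
  qed
  ultimately show ?thesis by (simp add: c_def)
qed

section \<open>Periodic three-term systems\<close>

definition periodic_seq :: "nat \<Rightarrow> (int \<Rightarrow> 'a) \<Rightarrow> bool" where
  "periodic_seq N c \<longleftrightarrow> (\<forall>j. c (j + int N) = c j)"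

lemma periodic_seq_add_mult:
  assumes "periodic_seq N c"
  shows "c (j + int N * t) = c j"
proof -
  have shift: "c (i + int N * int m) = c i" for i m
  proof (induction m)
    case (Suc m)
    have "i + int N * int (Suc m) = (i + int N * int m) + int N" by (simp add: algebra_simps)
    then show ?case using Suc assms unfolding periodic_seq_def by metis
  qed simp
  show ?thesis
  proof (cases "t \<ge> 0")
    case True
    then show ?thesis using shift[of j "nat t"] by simp
  next
    case False
    then show ?thesis using shift[of "j + int N * t" "nat (- t)"] by simp
  qed
qed

lemma periodic_seq_mod:
  "periodic_seq N c \<Longrightarrow> c (j mod int N) = c j"
  using periodic_seq_add_mult[of N c "j mod int N" "j div int N"] by simp

lemma periodic_seq_abs_max:
  fixes c :: "int \<Rightarrow> real"
  assumes "N \<ge> 1" and "periodic_seq N c"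
  obtains j0 where "\<And>j. \<bar>c j\<bar> \<le> \<bar>c j0\<bar>"
proof -
  let ?A = "(\<lambda>j. \<bar>c j\<bar>) ` {0..<int N}"
  have "?A \<noteq> {}" using assms(1) by simp
  then have "Max ?A \<in> ?A" by (intro Max_in) auto
  then obtain j0 where j0: "Max ?A = \<bar>c j0\<bar>" by blast
  have "\<bar>c j\<bar> \<le> \<bar>c j0\<bar>" for j
  proof -
    have "\<bar>c (j mod int N)\<bar> \<le> Max ?A"
      using assms(1) by (intro Max_ge) auto
    then show ?thesis using j0 periodic_seq_mod[OF assms(2)] by simp
  qed
  then show ?thesis by (rule that)
qed

lemma periodic_seq_sum_shift:
  fixes F :: "int \<Rightarrow> 'a::comm_monoid_add"
  assumes "N \<ge> 1" and "periodic_seq N F"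
  shows "(\<Sum>m=1..N. F (int m + 1)) = (\<Sum>m=1..N. F (int m))"
proof -
  have "(\<Sum>m=1..N. F (int m + 1)) = (\<Sum>m=Suc 1..Suc N. F (int m))"
    by (simp only: sum.shift_bounds_cl_Suc_ivl) (simp add: add.commute)
  also have "\<dots> = (\<Sum>m=Suc 1..N. F (int m)) + F (1 + int N)"
    using assms(1) by (simp add: add.commute)
  also have "F (1 + int N) = F 1"
    using assms(2) by (simp add: periodic_seq_def)
  also have "(\<Sum>m=Suc 1..N. F (int m)) + F 1 = (\<Sum>m=1..N. F (int m))"
    using assms(1) by (simp add: sum.atLeast_Suc_atMost add.commute)
  finally show ?thesis .
qed

lemma periodic_three_term_max_principle:
  fixes a b K :: real and e :: "int \<Rightarrow> real"
  assumes "N \<ge> 1" and ab: "\<bar>b\<bar> < a" and "periodic_seq N e"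
    and K: "\<And>j. \<bar>2 * a * e j + b * (e (j - 1) + e (j + 1))\<bar> \<le> K"
  shows "\<bar>e j\<bar> \<le> K / (2 * (a - \<bar>b\<bar>))"
proof -
  obtain j0 where j0: "\<And>j. \<bar>e j\<bar> \<le> \<bar>e j0\<bar>"
    using periodic_seq_abs_max[OF assms(1,3)] by blast
  have "\<bar>b * (e (j0 - 1) + e (j0 + 1))\<bar> \<le> \<bar>b\<bar> * (2 * \<bar>e j0\<bar>)"
    unfolding abs_mult using j0[of "j0 - 1"] j0[of "j0 + 1"]
    by (intro mult_left_mono) (auto simp: abs_triangle_ineq[THEN order_trans])
  moreover have "\<bar>2 * a * e j0\<bar> = 2 * a * \<bar>e j0\<bar>" using ab by (simp add: abs_mult)
  ultimately have "2 * a * \<bar>e j0\<bar> \<le> K + \<bar>b\<bar> * (2 * \<bar>e j0\<bar>)"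
    using K[of j0] by linarith
  then have "\<bar>e j0\<bar> \<le> K / (2 * (a - \<bar>b\<bar>))"
    using ab by (simp add: field_simps)
  then show ?thesis using j0[of j] by linarith
qed

text \<open>The solution of the diagonally dominant system is the Neumann series \<open>\<Sum>\<^sub>n u\<^sub>n\<close> of the Jacobi
  iterates \<open>u\<^sub>n\<close>.\<close>

primrec jacobi_iter :: "real \<Rightarrow> real \<Rightarrow> (int \<Rightarrow> real) \<Rightarrow> nat \<Rightarrow> int \<Rightarrow> real" where
  "jacobi_iter a b \<beta> 0 j = \<beta> j / (2 * a)"
| "jacobi_iter a b \<beta> (Suc n) j = - (b / (2 * a)) * (jacobi_iter a b \<beta> n (j - 1) + jacobi_iter a b \<beta> n (j + 1))"

lemma jacobi_iter_bound:
  assumes ab: "\<bar>b\<bar> < a" and \<beta>: "\<And>j. \<bar>\<beta> j\<bar> \<le> B"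
  shows "\<bar>jacobi_iter a b \<beta> n j\<bar> \<le> (\<bar>b\<bar> / a) ^ n * (B / (2 * a))"
proof (induction n arbitrary: j)
  case 0
  then show ?case using \<beta>[of j] ab by (simp add: abs_divide divide_right_mono)
next
  case (Suc n)
  have "\<bar>jacobi_iter a b \<beta> (Suc n) j\<bar> = \<bar>b\<bar> / (2 * a) * \<bar>jacobi_iter a b \<beta> n (j - 1) + jacobi_iter a b \<beta> n (j + 1)\<bar>"
    using ab by (simp add: abs_mult abs_divide)
  also have "\<dots> \<le> \<bar>b\<bar> / (2 * a) * (2 * ((\<bar>b\<bar> / a) ^ n * (B / (2 * a))))"
  proof (rule mult_left_mono)
    show "\<bar>jacobi_iter a b \<beta> n (j - 1) + jacobi_iter a b \<beta> n (j + 1)\<bar> \<le> 2 * ((\<bar>b\<bar> / a) ^ n * (B / (2 * a)))"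
      using Suc.IH[of "j - 1"] Suc.IH[of "j + 1"] abs_triangle_ineq[of "jacobi_iter a b \<beta> n (j - 1)"] by linarith
  qed (use ab in simp)
  also have "\<dots> = (\<bar>b\<bar> / a) ^ Suc n * (B / (2 * a))"
    using ab by (simp add: field_simps)
  finally show ?case .
qed

lemma summable_jacobi_iter:
  assumes "\<bar>b\<bar> < a" and "\<And>j. \<bar>\<beta> j\<bar> \<le> B"
  shows "summable (\<lambda>n. jacobi_iter a b \<beta> n j)"
  by (rule summable_comparison_test'[where N=0, OF summable_mult2[OF summable_geometric[of "\<bar>b\<bar> / a"], of "B / (2 * a)"]])
    (use assms jacobi_iter_bound[of b a \<beta> B] in auto)

lemma jacobi_iter_periodic:
  assumes "periodic_seq N \<beta>"
  shows "periodic_seq N (jacobi_iter a b \<beta> n)"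
  unfolding periodic_seq_def
proof (induction n)
  case 0
  then show ?case using assms by (simp add: periodic_seq_def)
next
  case (Suc n)
  then have "jacobi_iter a b \<beta> n (j + int N - 1) = jacobi_iter a b \<beta> n (j - 1)"
    "jacobi_iter a b \<beta> n (j + int N + 1) = jacobi_iter a b \<beta> n (j + 1)" for j
    by (metis add.commute add.left_commute diff_add_eq)+
  then show ?case by simp
qed

lemma periodic_three_term_solvable:
  fixes a b :: real and \<beta> :: "int \<Rightarrow> real"
  assumes "N \<ge> 1" and ab: "\<bar>b\<bar> < a" and \<beta>: "periodic_seq N \<beta>"
  obtains c where "periodic_seq N c" and "\<And>j. 2 * a * c j + b * (c (j - 1) + c (j + 1)) = \<beta> j"
proof -
  let ?u = "jacobi_iter a b \<beta>"
  obtain j0 where "\<And>j. \<bar>\<beta> j\<bar> \<le> \<bar>\<beta> j0\<bar>"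
    using periodic_seq_abs_max[OF assms(1) \<beta>] by blast
  note sm = summable_jacobi_iter[OF ab this]
  define c where "c j = (\<Sum>n. ?u n j)" for j
  have "periodic_seq N c"
    using jacobi_iter_periodic[OF \<beta>] by (simp add: periodic_seq_def c_def)
  moreover have "2 * a * c j + b * (c (j - 1) + c (j + 1)) = \<beta> j" for j
  proof -
    have "c j - \<beta> j / (2 * a) = (\<Sum>n. ?u (Suc n) j)"
      unfolding c_def using suminf_split_head[OF sm] by simp
    also have "\<dots> = - (b / (2 * a)) * (\<Sum>n. ?u n (j - 1) + ?u n (j + 1))"
      unfolding jacobi_iter.simps by (rule suminf_mult[OF summable_add[OF sm sm]])
    also have "(\<Sum>n. ?u n (j - 1) + ?u n (j + 1)) = c (j - 1) + c (j + 1)"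
      unfolding c_def by (rule suminf_add[OF sm sm, symmetric])
    finally have "2 * a * (c j - \<beta> j / (2 * a)) = 2 * a * (- (b / (2 * a)) * (c (j - 1) + c (j + 1)))"
      by simp
    moreover have "a > 0" using ab by linarith
    ultimately show ?thesis by (simp add: right_diff_distrib algebra_simps)
  qed
  ultimately show ?thesis by (rule that)
qed

lemma three_term_defect_constant_le:
  fixes s u p a \<delta> E :: real
  assumes "u > 0" "p > 0" "s + u = 2 * a" "p \<le> s" "u \<le> s" "\<delta> \<ge> 0" "E \<ge> 0"
  shows "s * ((s / p * \<delta> + 2 * E) / (2 * u)) + a / p * \<delta> + E \<le> 2 * a * s / (u * p) * (\<delta> + E)"
proof -
  have a: "a = (s + u) / 2" using assms(3) by simp
  have "s * s / (2 * u * p) + (s + u) / (2 * p) = (s * s + u * (s + u)) / (2 * u * p)"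
    using assms(1,2) by (simp add: field_simps)
  also have "\<dots> \<le> (2 * ((s + u) * s)) / (2 * u * p)"
  proof (intro divide_right_mono)
    have "u * u \<le> s * s" "0 \<le> s * u"
      using assms(1,5) mult_mono[OF assms(5) assms(5)] by simp_all
    then show "s * s + u * (s + u) \<le> 2 * ((s + u) * s)" by (simp add: algebra_simps)
  qed (use assms(1,2) in simp)
  finally have \<delta>: "s * s / (2 * u * p) + (s + u) / (2 * p) \<le> (s + u) * s / (u * p)" by simp
  have "s / u + 1 = (s + u) * p / (u * p)"
    using assms(1,2) by (simp add: field_simps)
  also have "\<dots> \<le> (s + u) * s / (u * p)"
    using assms(1,2,4,5) by (intro divide_right_mono mult_left_mono) auto
  finally have E: "s / u + 1 \<le> (s + u) * s / (u * p)" .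
  have "s * ((s / p * \<delta> + 2 * E) / (2 * u)) + a / p * \<delta> + E
      = (s * s / (2 * u * p) + (s + u) / (2 * p)) * \<delta> + (s / u + 1) * E"
    using assms(1,2) unfolding a by (simp add: field_simps)
  also have "\<dots> \<le> (s + u) * s / (u * p) * \<delta> + (s + u) * s / (u * p) * E"
    using \<delta> E assms(6,7) by (intro add_mono mult_right_mono)
  also have "\<dots> = (s + u) * s / (u * p) * (\<delta> + E)"
    by (simp only: distrib_left)
  also have "(s + u) * s / (u * p) = 2 * a * s / (u * p)"
    using assms(3) by simp
  finally show ?thesis .
qed

text \<open>The constant sequence \<open>g\<close> would be solved exactly by \<open>g / (a + b)\<close>; for slowly varying \<open>g\<close>
  this is still the leading part of \<open>e\<close>.\<close>

lemma periodic_three_term_deviation_bound: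
  fixes a b \<delta> E :: real and e g \<epsilon> \<epsilon>' :: "int \<Rightarrow> real"
  assumes "N \<ge> 1" and ab: "\<bar>b\<bar> < a" and "periodic_seq N e" "periodic_seq N g"
    and eq: "\<And>j. 2 * a * e j + b * (e (j - 1) + e (j + 1)) = g (j - 1) + g j + \<epsilon> j + \<epsilon>' j"
    and \<epsilon>: "\<And>j. \<bar>\<epsilon> j\<bar> \<le> E" "\<And>j. \<bar>\<epsilon>' j\<bar> \<le> E"
    and \<delta>: "\<And>j. \<bar>g j - g (j - 1)\<bar> \<le> \<delta>"
  shows "\<bar>e j - g j / (a + b)\<bar> \<le> ((a + \<bar>b\<bar>) / (a + b) * \<delta> + 2 * E) / (2 * (a - \<bar>b\<bar>))"
proof -
  have p: "a + b > 0" using ab by linarith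
  define z where "z j = e j - g j / (a + b)" for j
  have "periodic_seq N z" using assms(3,4) by (simp add: periodic_seq_def z_def)
  moreover have "\<bar>2 * a * z j + b * (z (j - 1) + z (j + 1))\<bar> \<le> (a + \<bar>b\<bar>) / (a + b) * \<delta> + 2 * E" for j
  proof -
    have "2 * a * z j + b * (z (j - 1) + z (j + 1)) = 2 * a * e j + b * (e (j - 1) + e (j + 1))
        - (2 * a * g j + b * g (j - 1) + b * g (j + 1)) / (a + b)"
      by (simp add: z_def add_divide_distrib diff_divide_distrib algebra_simps)
    also have "\<dots> = (a * (g (j - 1) - g j) + b * (g j - g (j + 1))) / (a + b) + \<epsilon> j + \<epsilon>' j"
      unfolding eq using p by (simp add: field_simps)
    finally have "2 * a * z j + b * (z (j - 1) + z (j + 1)) =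
        (a * (g (j - 1) - g j) + b * (g j - g (j + 1))) / (a + b) + \<epsilon> j + \<epsilon>' j" .
    moreover have "\<bar>a * (g (j - 1) - g j) + b * (g j - g (j + 1))\<bar> \<le> (a + \<bar>b\<bar>) * \<delta>"
      using \<delta>[of j] \<delta>[of "j + 1"] ab
      by (intro abs_triangle_ineq[THEN order_trans]) (simp add: abs_mult distrib_right abs_minus_commute
          add_mono mult_left_mono)
    then have "\<bar>(a * (g (j - 1) - g j) + b * (g j - g (j + 1))) / (a + b)\<bar> \<le> (a + \<bar>b\<bar>) / (a + b) * \<delta>"
      using p by (simp add: abs_divide divide_right_mono)
    ultimately show ?thesis
      using \<epsilon>(1)[of j] \<epsilon>(2)[of j] by linarith
  qed
  ultimately show ?thesis
    using periodic_three_term_max_principle[OF assms(1) ab] unfolding z_def by blast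
qed

lemma periodic_three_term_defect_bound:
  fixes a b \<delta> E :: real and e g \<epsilon> \<epsilon>' :: "int \<Rightarrow> real"
  assumes "N \<ge> 1" and ab: "\<bar>b\<bar> < a" and "periodic_seq N e" "periodic_seq N g"
    and eq: "\<And>j. 2 * a * e j + b * (e (j - 1) + e (j + 1)) = g (j - 1) + g j + \<epsilon> j + \<epsilon>' j"
    and \<epsilon>: "\<And>j. \<bar>\<epsilon> j\<bar> \<le> E" "\<And>j. \<bar>\<epsilon>' j\<bar> \<le> E"
    and \<delta>: "\<And>j. \<bar>g j - g (j - 1)\<bar> \<le> \<delta>"
  shows "\<bar>a * e i + b * e (i - 1) - g (i - 1) - \<epsilon> i\<bar>
    \<le> 2 * a * (a + \<bar>b\<bar>) / ((a - \<bar>b\<bar>) * (a + b)) * (\<delta> + E)"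
proof -
  have p: "a + b > 0" and u: "a - \<bar>b\<bar> > 0" and s: "a + b \<le> a + \<bar>b\<bar>" using ab by linarith+
  have nonneg: "\<delta> \<ge> 0" "E \<ge> 0" using \<delta>[of 0] \<epsilon>(1)[of 0] by linarith+
  define z where "z j = e j - g j / (a + b)" for j
  define Z where "Z = ((a + \<bar>b\<bar>) / (a + b) * \<delta> + 2 * E) / (2 * (a - \<bar>b\<bar>))"
  have z: "\<bar>z j\<bar> \<le> Z" for j
    unfolding z_def Z_def by (rule periodic_three_term_deviation_bound[OF assms])
  have "a * z i + b * z (i - 1) = a * e i + b * e (i - 1) - (a * g i + b * g (i - 1)) / (a + b)"
    by (simp add: z_def add_divide_distrib diff_divide_distrib algebra_simps)
  moreover have "(a * g i + b * g (i - 1)) / (a + b) = g (i - 1) + a * (g i - g (i - 1)) / (a + b)"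
    using p by (simp add: field_simps)
  ultimately have "a * e i + b * e (i - 1) - g (i - 1) - \<epsilon> i
      = a * z i + b * z (i - 1) + a * (g i - g (i - 1)) / (a + b) - \<epsilon> i"
    by simp
  also have "\<bar>\<dots>\<bar> \<le> (a + \<bar>b\<bar>) * Z + a / (a + b) * \<delta> + E"
  proof -
    have "\<bar>a * z i\<bar> \<le> a * Z"
      using mult_left_mono[OF z[of i], of a] ab by (simp add: abs_mult)
    moreover have "\<bar>b * z (i - 1)\<bar> \<le> \<bar>b\<bar> * Z"
      using mult_left_mono[OF z[of "i - 1"], of "\<bar>b\<bar>"] by (simp add: abs_mult)
    ultimately have "\<bar>a * z i + b * z (i - 1)\<bar> \<le> (a + \<bar>b\<bar>) * Z"
      using abs_triangle_ineq[of "a * z i" "b * z (i - 1)"] by (simp add: distrib_right)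
    moreover have "\<bar>a * (g i - g (i - 1)) / (a + b)\<bar> \<le> a / (a + b) * \<delta>"
      using \<delta>[of i] ab p by (auto simp: abs_mult abs_divide intro!: divide_right_mono mult_left_mono)
    ultimately show ?thesis using \<epsilon>(1)[of i] by linarith
  qed
  also have "\<dots> \<le> 2 * a * (a + \<bar>b\<bar>) / ((a - \<bar>b\<bar>) * (a + b)) * (\<delta> + E)"
    unfolding Z_def using p u s nonneg by (intro three_term_defect_constant_le) auto
  finally show ?thesis .
qed

section \<open>The space \<open>S\<^sub>h\<^sup>1\<close> and the projection \<open>\<pi>\<^sub>1\<close>\<close>

definition elem_pt :: "nat \<Rightarrow> int \<Rightarrow> real \<Rightarrow> real" where
  "elem_pt N m s = (of_int m - 1 + s) / real N"

text \<open>\<open>psi_spline N k c\<close> is \<open>\<Sum>\<^sub>j c\<^sub>j \<ell>\<^sub>j\<close>, written element by element in the local coordinate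
  \<open>s = N x - (m - 1)\<close> on \<open>[x\<^sub>m\<^sub>-\<^sub>1, x\<^sub>m]\<close>.\<close>

definition psi_spline :: "nat \<Rightarrow> nat \<Rightarrow> (int \<Rightarrow> real) \<Rightarrow> real \<Rightarrow> real" where
  "psi_spline N k c x = (let m = \<lfloor>x * real N\<rfloor> + 1; s = frac (x * real N) in
      c m * psi k s + c (m - 1) * psi k (1 - s))"

definition elem_moment :: "nat \<Rightarrow> (real \<Rightarrow> real) \<Rightarrow> (real \<Rightarrow> real) \<Rightarrow> int \<Rightarrow> real" where
  "elem_moment N w f m = integral {0..1} (\<lambda>s. f (elem_pt N m s) * w s)"

lemma elem_pt_eq: "elem_pt N m s = node N (m - 1) + s / real N"
  by (simp add: elem_pt_def node_def add_divide_distrib)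

lemma elem_pt_0: "elem_pt N m 0 = node N (m - 1)"
  and elem_pt_1: "elem_pt N m 1 = node N m"
  by (simp_all add: elem_pt_def node_def)

lemma elem_pt_add_N: "N \<ge> 1 \<Longrightarrow> elem_pt N (m + int N) s = elem_pt N m s + 1"
  by (simp add: elem_pt_def field_simps)

lemma continuous_on_elem_pt [continuous_intros]:
  "continuous_on S g \<Longrightarrow> continuous_on S (\<lambda>x. elem_pt N m (g x))"
  unfolding elem_pt_def divide_inverse by (intro continuous_intros)

lemma psi_spline_on_elem:
  assumes k: "k \<ge> 1" and "of_int m - 1 \<le> x * real N" "x * real N \<le> of_int m"
  shows "psi_spline N k c x = c m * psi k (x * real N - (of_int m - 1)) + c (m - 1) * psi k (of_int m - x * real N)"
proof (cases "x * real N < of_int m")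
  case True
  then have fl: "\<lfloor>x * real N\<rfloor> = m - 1" using assms(2) by (simp add: floor_eq_iff)
  show ?thesis unfolding psi_spline_def Let_def frac_def fl by (simp add: algebra_simps)
next
  case False
  then have "x * real N = of_int m" using assms(3) by simp
  then show ?thesis using psi_0[OF k] by (simp add: psi_spline_def)
qed

lemma psi_spline_elem_pt:
  assumes "k \<ge> 1" "N \<ge> 1" "s \<in> {0..1}"
  shows "psi_spline N k c (elem_pt N m s) = c m * psi k s + c (m - 1) * psi k (1 - s)"
proof -
  have "elem_pt N m s * real N = of_int m - 1 + s" using assms(2) by (simp add: elem_pt_def)
  then show ?thesis using psi_spline_on_elem[OF assms(1), of m "elem_pt N m s"] assms(3) by simp
qed

lemma psi_spline_node:
  assumes k: "k \<ge> 1" and "N \<ge> 1"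
  shows "psi_spline N k c (node N j) = c j * psi k 1"
  using psi_spline_elem_pt[OF assms, of 1 c j] psi_0[OF k] by (simp add: elem_pt_1)

lemma psi_spline_periodic:
  assumes "periodic_seq N c"
  shows "psi_spline N k c (x + 1) = psi_spline N k c x"
proof -
  have "(x + 1) * real N = x * real N + of_int (int N)" by (simp add: algebra_simps)
  then have "\<lfloor>(x + 1) * real N\<rfloor> = \<lfloor>x * real N\<rfloor> + int N" "frac ((x + 1) * real N) = frac (x * real N)"
    by (simp_all add: frac_def)
  moreover have "c (\<lfloor>x * real N\<rfloor> + int N + 1) = c (\<lfloor>x * real N\<rfloor> + 1)"
    "c (\<lfloor>x * real N\<rfloor> + int N + 1 - 1) = c (\<lfloor>x * real N\<rfloor> + 1 - 1)"
    using assms unfolding periodic_seq_def by (metis add.commute add.left_commute, simp)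
  ultimately show ?thesis by (simp add: psi_spline_def Let_def)
qed

lemma continuous_on_psi_spline_elem:
  assumes "k \<ge> 1" "N \<ge> 1"
  shows "continuous_on {(of_int m - 1) / real N .. of_int m / real N} (psi_spline N k c)"
proof -
  have "continuous_on {(of_int m - 1) / real N .. of_int m / real N}
      (\<lambda>x. c m * psi k (x * real N - (of_int m - 1)) + c (m - 1) * psi k (of_int m - x * real N))"
    by (intro continuous_intros)
  then show ?thesis
  proof (rule continuous_on_eq)
    fix x assume "x \<in> {(of_int m - 1) / real N .. of_int m / real N}"
    then have "of_int m - 1 \<le> x * real N" "x * real N \<le> of_int m"
      using assms(2) by (simp_all add: pos_divide_le_eq pos_le_divide_eq)
    then show "c m * psi k (x * real N - (of_int m - 1)) + c (m - 1) * psi k (of_int m - x * real N) =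
        psi_spline N k c x"
      by (rule psi_spline_on_elem[OF assms(1), symmetric])
  qed
qed

lemma continuous_on_psi_spline:
  assumes "k \<ge> 1" "N \<ge> 1"
  shows "continuous_on UNIV (psi_spline N k c)"
proof -
  have "isCont (psi_spline N k c) x" for x
  proof -
    define j where "j = \<lfloor>x * real N\<rfloor>"
    let ?a = "(of_int j - 1) / real N" and ?b = "of_int j / real N" and ?c = "(of_int j + 1) / real N"
    have N: "real N > 0" using assms(2) by simp
    have "of_int j - 1 < x * real N" "x * real N < of_int j + 1"
      unfolding j_def using of_int_floor_le[of "x * real N"] real_of_int_floor_add_one_gt[of "x * real N"]
      by linarith+
    then have x: "x \<in> {?a<..<?c}" using N by (simp add: pos_divide_less_eq pos_less_divide_eq)
    have "continuous_on {?a..?b} (psi_spline N k c)"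
      by (rule continuous_on_psi_spline_elem[OF assms])
    moreover have "continuous_on {?b..?c} (psi_spline N k c)"
      using continuous_on_psi_spline_elem[OF assms, where m="j + 1"] by simp
    ultimately have "continuous_on ({?a..?b} \<union> {?b..?c}) (psi_spline N k c)"
      by (intro continuous_on_closed_Un) auto
    moreover have "{?a<..<?c} \<subseteq> {?a..?b} \<union> {?b..?c}" by auto
    ultimately show ?thesis
      using x continuous_on_interior interior_maximal[OF _ open_greaterThanLessThan] by (metis subsetD)
  qed
  then show ?thesis by (simp add: continuous_at_imp_continuous_on)
qed

lemma psi_spline_in_Vh:
  assumes k: "k \<ge> 1" and N: "N \<ge> 1" and c: "periodic_seq N c"
  shows "psi_spline N k c \<in> Vh N k"
proof -
  have "\<exists>p::real poly. degree p \<le> k \<and> (\<forall>x\<in>{node N (int i - 1)..node N (int i)}. psi_spline N k c x = poly p x)"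
    if "i \<in> {1..N}" for i
  proof -
    define p where "p = smult (c (int i)) (pcompose (psi_poly k) [:- (of_int (int i) - 1), real N:]) +
      smult (c (int i - 1)) (pcompose (psi_poly k) [:of_int (int i), - real N:])"
    have "degree p \<le> k"
      unfolding p_def using degree_psi_poly[OF k] by (intro degree_add_le) (auto simp: degree_pcompose)
    moreover have "psi_spline N k c x = poly p x" if "x \<in> {node N (int i - 1)..node N (int i)}" for x
    proof -
      have "of_int (int i) - 1 \<le> x * real N" "x * real N \<le> of_int (int i)"
        using that N by (auto simp: node_def field_simps)
      then have "psi_spline N k c x = c (int i) * psi k (x * real N - (of_int (int i) - 1))
          + c (int i - 1) * psi k (of_int (int i) - x * real N)"
        by (rule psi_spline_on_elem[OF k])
      then show ?thesis by (simp add: p_def poly_pcompose psi_def algebra_simps)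
    qed
    ultimately show ?thesis by blast
  qed
  then show ?thesis
    unfolding Vh_def using psi_spline_periodic[OF c] continuous_on_psi_spline[OF k N] by auto
qed

lemma integral_elem:
  fixes f :: "real \<Rightarrow> real"
  assumes N: "N \<ge> 1" and f: "continuous_on {node N (m - 1)..node N m} f"
  shows "integral {node N (m - 1)..node N m} f = integral {0..1} (\<lambda>s. f (elem_pt N m s)) / real N"
proof -
  let ?a = "node N (m - 1)" and ?h = "1 / real N"
  have h: "?h > 0" using N by simp
  have b: "node N m = ?a + ?h" using N by (simp add: node_def field_simps)
  have "(f has_integral integral {?a..node N m} f) (cbox ?a (?a + ?h))"
    using integrable_continuous_interval[OF f] b by (simp add: integrable_integral)
  from has_integral_affinity'[OF this h, of ?a]
  have "((\<lambda>s. f (elem_pt N m s)) has_integral (integral {?a..node N m} f * real N)) {0..1}"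
    using N by (simp add: elem_pt_def node_def field_simps)
  then have "integral {0..1} (\<lambda>s. f (elem_pt N m s)) = integral {?a..node N m} f * real N"
    by (rule integral_unique)
  then show ?thesis using N by simp
qed

lemma integral_unit_interval_sum_elems:
  fixes f :: "real \<Rightarrow> real"
  assumes N: "N \<ge> 1" and f: "continuous_on {0..1} f"
  shows "integral {0..1} f = (\<Sum>m=1..N. integral {node N (int m - 1)..node N (int m)} f)"
proof -
  have "integral {0..node N (int n)} f = (\<Sum>m=1..n. integral {node N (int m - 1)..node N (int m)} f)"
    if "n \<le> N" for n
    using that
  proof (induction n)
    case 0
    then show ?case by (simp add: node_def)
  next
    case (Suc n)
    have le: "0 \<le> node N (int n)" "node N (int n) \<le> node N (int (Suc n))"
      by (auto simp: node_def divide_right_mono)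
    have "node N (int (Suc n)) \<le> 1" using Suc.prems by (simp add: node_def)
    then have I: "f integrable_on {0..node N (int (Suc n))}"
      by (intro integrable_continuous_interval continuous_on_subset[OF f]) auto
    have "integral {0..node N (int n)} f + integral {node N (int n)..node N (int (Suc n))} f
        = integral {0..node N (int (Suc n))} f"
      by (rule Henstock_Kurzweil_Integration.integral_combine[OF le I])
    then show ?case using Suc by simp
  qed
  from this[of N] N show ?thesis by (simp add: node_def)
qed

lemma integral_unit_interval_elem_pt:
  fixes f :: "real \<Rightarrow> real"
  assumes N: "N \<ge> 1" and f: "continuous_on {0..1} f"
  shows "integral {0..1} f = (\<Sum>m=1..N. integral {0..1} (\<lambda>s. f (elem_pt N (int m) s))) / real N"
proof -
  have "{node N (int m - 1)..node N (int m)} \<subseteq> {0..1}" if "m \<in> {1..N}" for m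
    using that N by (auto simp: node_def field_simps)
  then have "integral {node N (int m - 1)..node N (int m)} f = integral {0..1} (\<lambda>s. f (elem_pt N (int m) s)) / real N"
    if "m \<in> {1..N}" for m
    using that by (intro integral_elem[OF N] continuous_on_subset[OF f])
  then show ?thesis
    unfolding integral_unit_interval_sum_elems[OF N f] sum_divide_distrib by (rule sum.cong[OF refl])
qed

lemma Vh_elem_poly:
  assumes g: "g \<in> Vh N k" and i: "i \<in> {1..N}"
  obtains q where "degree q \<le> k" "\<And>s. s \<in> {0..1} \<Longrightarrow> g (elem_pt N (int i) s) = poly q s"
proof -
  obtain p :: "real poly" where p: "degree p \<le> k" "\<forall>x\<in>{node N (int i - 1)..node N (int i)}. g x = poly p x"
    using g i unfolding Vh_def by blast
  define q where "q = pcompose p [:node N (int i - 1), 1 / real N:]"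
  have "degree q \<le> k" using p(1) by (simp add: q_def degree_pcompose)
  moreover have "g (elem_pt N (int i) s) = poly q s" if "s \<in> {0..1}" for s
  proof -
    have "elem_pt N (int i) s \<in> {node N (int i - 1)..node N (int i)}"
      using that by (auto simp: elem_pt_def node_def divide_right_mono)
    then show ?thesis using p(2) by (simp add: q_def poly_pcompose elem_pt_eq)
  qed
  ultimately show ?thesis by (rule that)
qed

lemma continuous_on_Vh: "g \<in> Vh N k \<Longrightarrow> continuous_on S g"
  unfolding Vh_def using continuous_on_subset by blast

lemma psi_spline_in_Sh1:
  assumes k: "k \<ge> 1" and N: "N \<ge> 1" and c: "periodic_seq N c"
  shows "psi_spline N k c \<in> Sh1 N k"
proof -
  have "integral {0..1} (\<lambda>x. psi_spline N k c x * g x) = 0" if g: "g \<in> Sh2 N k" for g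
  proof -
    have gV: "g \<in> Vh N k" and g0: "\<And>i. g (node N i) = 0" using g unfolding Sh2_def by auto
    have "integral {0..1} (\<lambda>s. psi_spline N k c (elem_pt N (int m) s) * g (elem_pt N (int m) s)) = 0"
      if m: "m \<in> {1..N}" for m
    proof -
      obtain q where q: "degree q \<le> k" "\<And>s. s \<in> {0..1} \<Longrightarrow> g (elem_pt N (int m) s) = poly q s"
        using Vh_elem_poly[OF gV m] by blast
      have q01: "poly q 0 = 0" "poly q 1 = 0"
        using q(2)[of 0] q(2)[of 1] g0 by (simp_all add: elem_pt_0 elem_pt_1)
      have "integral {0..1} (\<lambda>s. psi_spline N k c (elem_pt N (int m) s) * g (elem_pt N (int m) s))
          = integral {0..1} (\<lambda>s. c (int m) * (poly q s * psi k s) + c (int m - 1) * (poly q s * psi k (1 - s)))"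
        by (rule integral_cong) (simp add: psi_spline_elem_pt[OF k N] q(2) algebra_simps)
      also have "\<dots> = c (int m) * integral {0..1} (\<lambda>s. poly q s * psi k s)
          + c (int m - 1) * integral {0..1} (\<lambda>s. poly q s * psi k (1 - s))"
        by (simp add: integral_add integrable_continuous_interval continuous_intros)
      finally show ?thesis
        using integral_poly_mult_psi_eq_0[OF k q(1) q01] integral_poly_mult_psi_reflected_eq_0[OF k q(1) q01]
        by simp
    qed
    moreover have "continuous_on {0..1} (\<lambda>x. psi_spline N k c x * g x)"
      using continuous_on_psi_spline[OF k N] continuous_on_Vh[OF gV]
      by (intro continuous_intros) (auto intro: continuous_on_subset)
    ultimately show ?thesis by (simp add: integral_unit_interval_elem_pt[OF N])
  qed
  then show ?thesis unfolding Sh1_def using psi_spline_in_Vh[OF k N c] by auto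
qed

lemma Vh_diff:
  assumes "f \<in> Vh N k" "g \<in> Vh N k"
  shows "(\<lambda>x. f x - g x) \<in> Vh N k"
proof -
  have "\<exists>p::real poly. degree p \<le> k \<and> (\<forall>x\<in>{node N (int i - 1)..node N (int i)}. f x - g x = poly p x)"
    if i: "i \<in> {1..N}" for i
  proof -
    obtain p :: "real poly" where "degree p \<le> k" "\<forall>x\<in>{node N (int i - 1)..node N (int i)}. f x = poly p x"
      using assms(1) i unfolding Vh_def by blast
    moreover obtain q :: "real poly" where "degree q \<le> k" "\<forall>x\<in>{node N (int i - 1)..node N (int i)}. g x = poly q x"
      using assms(2) i unfolding Vh_def by blast
    ultimately show ?thesis by (intro exI[of _ "p - q"]) (auto intro: degree_diff_le)
  qed
  moreover have "continuous_on UNIV (\<lambda>x. f x - g x)"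
    using continuous_on_Vh[OF assms(1)] continuous_on_Vh[OF assms(2)] by (intro continuous_intros)
  ultimately show ?thesis using assms unfolding Vh_def by auto
qed

lemma Sh1_diff:
  assumes "f \<in> Sh1 N k" "g \<in> Sh1 N k"
  shows "(\<lambda>x. f x - g x) \<in> Sh1 N k"
proof -
  have fV: "f \<in> Vh N k" and gV: "g \<in> Vh N k" using assms unfolding Sh1_def by auto
  have "integral {0..1} (\<lambda>x. (f x - g x) * G x) = 0" if G: "G \<in> Sh2 N k" for G
  proof -
    have "G \<in> Vh N k" using G unfolding Sh2_def by auto
    then have "integral {0..1} (\<lambda>x. (f x - g x) * G x) = integral {0..1} (\<lambda>x. f x * G x) - integral {0..1} (\<lambda>x. g x * G x)"
      using fV gV by (simp add: left_diff_distrib integral_diff integrable_continuous_interval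
          continuous_on_Vh continuous_intros)
    also have "\<dots> = 0" using assms G unfolding Sh1_def by auto
    finally show ?thesis .
  qed
  then show ?thesis unfolding Sh1_def using Vh_diff[OF fV gV] by auto
qed

lemma periodic_add_of_int:
  fixes f :: "real \<Rightarrow> 'a"
  assumes "\<And>x. f (x + 1) = f x"
  shows "f (x + of_int n) = f x"
proof -
  have shift: "f (y + real m) = f y" for y m
  proof (induction m)
    case (Suc m)
    then show ?case using assms[of "y + real m"] by (simp add: algebra_simps)
  qed simp
  show ?thesis
  proof (cases "n \<ge> 0")
    case True
    then show ?thesis using shift[of x "nat n"] by simp
  next
    case False
    then show ?thesis using shift[of "x + of_int n" "nat (- n)"] by simp
  qed
qed

lemma periodic_frac:
  fixes f :: "real \<Rightarrow> 'a"
  assumes "\<And>y. f (y + 1) = f y"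
  shows "f (frac x) = f x"
  using periodic_add_of_int[of f "frac x" "\<lfloor>x\<rfloor>"] assms by (simp add: frac_def)

lemma periodic_eqI:
  fixes f g :: "real \<Rightarrow> 'a"
  assumes "\<And>x. f (x + 1) = f x" "\<And>x. g (x + 1) = g x" "\<And>x. x \<in> {0..1} \<Longrightarrow> f x = g x"
  shows "f = g"
proof
  fix x :: real
  have "frac x \<in> {0..1}" using frac_lt_1[of x] frac_ge_0[of x] by simp
  then show "f x = g x" using assms(3) periodic_frac[of f, OF assms(1)] periodic_frac[of g, OF assms(2)] by metis
qed

lemma Vh_periodic: "g \<in> Vh N k \<Longrightarrow> g (x + 1) = g x"
  unfolding Vh_def by blast

lemma Sh1_eq_psi_spline:
  assumes k: "k \<ge> 1" and N: "N \<ge> 1" and \<phi>: "\<phi> \<in> Sh1 N k"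
  defines "d \<equiv> \<lambda>j. \<phi> (node N j) / psi k 1"
  shows "periodic_seq N d" and "\<phi> = psi_spline N k d"
proof -
  have \<phi>V: "\<phi> \<in> Vh N k" using \<phi> unfolding Sh1_def by blast
  have "node N (j + int N) = node N j + 1" for j using N by (simp add: node_def field_simps)
  then show d: "periodic_seq N d"
    unfolding periodic_seq_def d_def by (simp add: Vh_periodic[OF \<phi>V])
  define g where "g x = \<phi> x - psi_spline N k d x" for x
  have gS1: "g \<in> Sh1 N k"
    unfolding g_def by (rule Sh1_diff[OF \<phi> psi_spline_in_Sh1[OF k N d]])
  then have gV: "g \<in> Vh N k" unfolding Sh1_def by blast
  have "g (node N j) = 0" for j
    unfolding g_def d_def using psi_spline_node[OF k N] psi_1_neq_0[OF k] by simp
  then have "g \<in> Sh2 N k" unfolding Sh2_def using gV by blast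
  then have "integral {0..1} (\<lambda>x. g x * g x) = 0" using gS1 unfolding Sh1_def by blast
  then have "g x = 0" if "x \<in> {0..1}" for x
    by (rule continuous_integral_square_eq_0[OF continuous_on_Vh[OF gV] zero_less_one _ that])
  then have "\<phi> x = psi_spline N k d x" if "x \<in> {0..1}" for x
    using that unfolding g_def by force
  then show "\<phi> = psi_spline N k d"
    using Vh_periodic[OF \<phi>V] psi_spline_periodic[OF d] by (intro periodic_eqI)
qed

lemma pi1_eqI:
  assumes "continuous_on {0..1} v" and w: "w \<in> Sh1 N k"
    and orth: "\<And>\<phi>. \<phi> \<in> Sh1 N k \<Longrightarrow> integral {0..1} (\<lambda>x. (v x - w x) * \<phi> x) = 0"
  shows "pi1 N k v = w"
  unfolding pi1_def
proof (rule the_equality)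
  show "w \<in> Sh1 N k \<and> (\<forall>\<phi>\<in>Sh1 N k. integral {0..1} (\<lambda>x. (v x - w x) * \<phi> x) = 0)"
    using w orth by blast
next
  fix w' assume w': "w' \<in> Sh1 N k \<and> (\<forall>\<phi>\<in>Sh1 N k. integral {0..1} (\<lambda>x. (v x - w' x) * \<phi> x) = 0)"
  have V: "w \<in> Vh N k" "w' \<in> Vh N k" using w w' unfolding Sh1_def by auto
  let ?D = "\<lambda>x. w' x - w x"
  have "0 = integral {0..1} (\<lambda>x. (v x - w x) * ?D x) - integral {0..1} (\<lambda>x. (v x - w' x) * ?D x)"
    using orth w' Sh1_diff[OF _ w, of w'] by auto
  also have "\<dots> = integral {0..1} (\<lambda>x. (v x - w x) * ?D x - (v x - w' x) * ?D x)"
    using assms(1) continuous_on_Vh[OF V(1)] continuous_on_Vh[OF V(2)]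
    by (intro integral_diff[symmetric] integrable_continuous_interval continuous_intros) auto
  also have "\<dots> = integral {0..1} (\<lambda>x. ?D x * ?D x)"
    by (simp add: algebra_simps)
  finally have DD: "integral {0..1} (\<lambda>x. ?D x * ?D x) = 0" by simp
  have cD: "continuous_on {0..1} ?D"
    using continuous_on_Vh[OF V(1)] continuous_on_Vh[OF V(2)] by (intro continuous_intros)
  have "w' x - w x = 0" if "x \<in> {0..1}" for x
    by (rule continuous_integral_square_eq_0[OF cD zero_less_one DD that])
  then show "w' = w" using Vh_periodic[OF V(1)] Vh_periodic[OF V(2)] by (intro periodic_eqI) auto
qed

lemma elem_moment_periodic:
  assumes "N \<ge> 1" and "\<And>x. f (x + 1) = f x"
  shows "periodic_seq N (elem_moment N w f)"
  using assms by (simp add: periodic_seq_def elem_moment_def elem_pt_add_N)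

lemma elem_moment_diff:
  assumes "continuous_on UNIV f" "continuous_on UNIV g" "continuous_on {0..1} w"
  shows "elem_moment N w (\<lambda>x. f x - g x) m = elem_moment N w f m - elem_moment N w g m"
proof -
  have "continuous_on {0..1} (\<lambda>s. f (elem_pt N m s))" "continuous_on {0..1} (\<lambda>s. g (elem_pt N m s))"
    by (auto intro!: continuous_on_compose2[OF assms(1)] continuous_on_compose2[OF assms(2)] continuous_intros)
  then show ?thesis
    unfolding elem_moment_def using assms(3)
    by (simp add: left_diff_distrib integral_diff integrable_continuous_interval continuous_intros)
qed

lemma elem_moment_psi_spline:
  assumes "k \<ge> 1" "N \<ge> 1"
  shows "elem_moment N (psi k) (psi_spline N k c) m = c m * psi_mass k + c (m - 1) * psi_cross_mass k"
    and "elem_moment N (\<lambda>s. psi k (1 - s)) (psi_spline N k c) m = c m * psi_cross_mass k + c (m - 1) * psi_mass k"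
proof -
  have "elem_moment N (psi k) (psi_spline N k c) m =
      integral {0..1} (\<lambda>s. c m * (psi k s * psi k s) + c (m - 1) * (psi k s * psi k (1 - s)))"
    unfolding elem_moment_def by (rule integral_cong) (simp add: psi_spline_elem_pt[OF assms] algebra_simps)
  then show "elem_moment N (psi k) (psi_spline N k c) m = c m * psi_mass k + c (m - 1) * psi_cross_mass k"
    by (simp add: integral_add integrable_continuous_interval continuous_intros psi_mass_def psi_cross_mass_def)
  have "elem_moment N (\<lambda>s. psi k (1 - s)) (psi_spline N k c) m =
      integral {0..1} (\<lambda>s. c m * (psi k s * psi k (1 - s)) + c (m - 1) * (psi k (1 - s) * psi k (1 - s)))"
    unfolding elem_moment_def by (rule integral_cong) (simp add: psi_spline_elem_pt[OF assms] algebra_simps)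
  then show "elem_moment N (\<lambda>s. psi k (1 - s)) (psi_spline N k c) m = c m * psi_cross_mass k + c (m - 1) * psi_mass k"
    by (simp add: integral_add integrable_continuous_interval continuous_intros psi_reflected_mass psi_cross_mass_def)
qed

lemma integral_mult_psi_spline:
  fixes f :: "real \<Rightarrow> real"
  assumes k: "k \<ge> 1" and N: "N \<ge> 1" and f: "continuous_on UNIV f" "\<And>x. f (x + 1) = f x"
    and d: "periodic_seq N d"
  shows "integral {0..1} (\<lambda>x. f x * psi_spline N k d x) =
     (\<Sum>m=1..N. d (int m) * (elem_moment N (psi k) f (int m) + elem_moment N (\<lambda>s. psi k (1 - s)) f (int m + 1))) / real N"
proof -
  let ?A = "elem_moment N (psi k) f" and ?B = "elem_moment N (\<lambda>s. psi k (1 - s)) f"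
  have elem: "integral {0..1} (\<lambda>s. f (elem_pt N m s) * psi_spline N k d (elem_pt N m s)) = d m * ?A m + d (m - 1) * ?B m"
    for m
  proof -
    have "integral {0..1} (\<lambda>s. f (elem_pt N m s) * psi_spline N k d (elem_pt N m s)) =
        integral {0..1} (\<lambda>s. d m * (f (elem_pt N m s) * psi k s) + d (m - 1) * (f (elem_pt N m s) * psi k (1 - s)))"
      by (rule integral_cong) (simp add: psi_spline_elem_pt[OF k N] algebra_simps)
    then show ?thesis
      unfolding elem_moment_def
      by (simp add: integral_add integrable_continuous_interval continuous_intros continuous_on_compose2[OF f(1)])
  qed
  have "continuous_on {0..1} (\<lambda>x. f x * psi_spline N k d x)"
    using f(1) continuous_on_psi_spline[OF k N] by (intro continuous_intros) (auto intro: continuous_on_subset)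
  then have "integral {0..1} (\<lambda>x. f x * psi_spline N k d x) =
      ((\<Sum>m=1..N. d (int m) * ?A (int m)) + (\<Sum>m=1..N. d (int m - 1) * ?B (int m))) / real N"
    by (simp add: integral_unit_interval_elem_pt[OF N] elem sum.distrib)
  also have "(\<Sum>m=1..N. d (int m - 1) * ?B (int m)) = (\<Sum>m=1..N. d (int m) * ?B (int m + 1))"
  proof -
    have "periodic_seq N (\<lambda>j. d (j - 1) * ?B j)"
      unfolding periodic_seq_def
    proof
      fix j
      have "d (j + int N - 1) = d (j - 1)"
        using d[unfolded periodic_seq_def, rule_format, of "j - 1"] by (simp add: algebra_simps)
      then show "d (j + int N - 1) * ?B (j + int N) = d (j - 1) * ?B j"
        using elem_moment_periodic[of N f, OF N f(2)] by (simp add: periodic_seq_def)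
    qed
    from periodic_seq_sum_shift[OF N this] show ?thesis by simp
  qed
  finally show ?thesis by (simp add: sum.distrib distrib_left)
qed

lemma pi1_eq_psi_spline:
  assumes k: "k \<ge> 1" and N: "N \<ge> 1" and v: "continuous_on UNIV v" "\<And>x. v (x + 1) = v x"
  obtains c where "periodic_seq N c"
    and "\<And>j. 2 * psi_mass k * c j + psi_cross_mass k * (c (j - 1) + c (j + 1)) =
      elem_moment N (psi k) v j + elem_moment N (\<lambda>s. psi k (1 - s)) v (j + 1)"
    and "pi1 N k v = psi_spline N k c"
proof -
  let ?A = "elem_moment N (psi k)" and ?B = "elem_moment N (\<lambda>s. psi k (1 - s))"
  have per: "?A v (j + int N) = ?A v j" "?B v (j + int N) = ?B v j" for j
    using elem_moment_periodic[of N v, OF N v(2)] by (simp_all add: periodic_seq_def)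
  have "periodic_seq N (\<lambda>j. ?A v j + ?B v (j + 1))"
    unfolding periodic_seq_def using per per(2)[of "j + 1" for j] by (simp add: ac_simps)
  then obtain c where c: "periodic_seq N c"
    and sys: "\<And>j. 2 * psi_mass k * c j + psi_cross_mass k * (c (j - 1) + c (j + 1)) = ?A v j + ?B v (j + 1)"
    using periodic_three_term_solvable[OF N abs_psi_cross_mass_less[OF k]] by blast
  let ?S = "psi_spline N k c"
  have S: "continuous_on UNIV ?S" by (rule continuous_on_psi_spline[OF k N])
  have "integral {0..1} (\<lambda>x. (v x - ?S x) * \<phi> x) = 0" if \<phi>: "\<phi> \<in> Sh1 N k" for \<phi>
  proof -
    define d where "d j = \<phi> (node N j) / psi k 1" for j
    have d: "periodic_seq N d" "\<phi> = psi_spline N k d"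
      using Sh1_eq_psi_spline[OF k N \<phi>] by (simp_all add: d_def[abs_def])
    have w: "continuous_on {0..1} (psi k)" "continuous_on {0..1} (\<lambda>s. psi k (1 - s))"
      by (intro continuous_intros)+
    have "?A (\<lambda>x. v x - ?S x) j + ?B (\<lambda>x. v x - ?S x) (j + 1) = 0" for j
      using sys[of j] elem_moment_diff[OF v(1) S w(1), of N j] elem_moment_diff[OF v(1) S w(2), of N "j + 1"]
        elem_moment_psi_spline[OF k N, of c j] elem_moment_psi_spline[OF k N, of c "j + 1"]
      by (simp add: algebra_simps)
    moreover have "integral {0..1} (\<lambda>x. (v x - ?S x) * psi_spline N k d x) =
        (\<Sum>m=1..N. d (int m) * (?A (\<lambda>x. v x - ?S x) (int m) + ?B (\<lambda>x. v x - ?S x) (int m + 1))) / real N"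
      using v S psi_spline_periodic[OF c] by (intro integral_mult_psi_spline[OF k N _ _ d(1)] continuous_intros) auto
    ultimately show ?thesis using d(2) by simp
  qed
  moreover have "continuous_on {0..1} v" using v(1) by (rule continuous_on_subset) simp
  ultimately have "pi1 N k v = ?S"
    by (intro pi1_eqI psi_spline_in_Sh1[OF k N c])
  with c sys show ?thesis by (rule that)
qed

section \<open>The error estimate\<close>

lemma Cp_higher_deriv_periodic:
  assumes "Cp n v" "j \<le> n"
  shows "(deriv ^^ j) v (x + 1) = (deriv ^^ j) v x"
  using assms(2)
proof (induction j arbitrary: x)
  case 0
  then show ?case using assms(1) by (simp add: Cp_def)
next
  case (Suc j)
  have "((deriv ^^ j) v has_real_derivative (deriv ^^ Suc j) v y) (at y)" for y
    using assms(1) Suc.prems by (simp add: Cp_def)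
  moreover have "(deriv ^^ j) v = (\<lambda>y. (deriv ^^ j) v (y + 1))"
    using Suc by simp
  ultimately have "((deriv ^^ j) v has_real_derivative (deriv ^^ Suc j) v (x + 1)) (at x)"
    using DERIV_shift[of "(deriv ^^ j) v" "(deriv ^^ Suc j) v (x + 1)" x 1] by metis
  then show ?case
    using DERIV_unique \<open>\<And>y. ((deriv ^^ j) v has_real_derivative (deriv ^^ Suc j) v y) (at y)\<close> by blast
qed

lemma abs_le_supnorm:
  fixes f :: "real \<Rightarrow> real"
  assumes "continuous_on UNIV f" and "\<And>x. f (x + 1) = f x"
  shows "\<bar>f x\<bar> \<le> supnorm f"
proof -
  have "compact (f ` {0..1})"
    by (rule compact_continuous_image[OF continuous_on_subset[OF assms(1)]]) auto
  then obtain B where B: "\<forall>y\<in>f ` {0..1}. \<bar>y\<bar> \<le> B"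
    using compact_imp_bounded bounded_iff by (metis real_norm_def)
  have "\<bar>f y\<bar> \<le> B" for y
  proof -
    have "frac y \<in> {0..1}" using frac_lt_1[of y] frac_ge_0[of y] by simp
    then have "\<bar>f (frac y)\<bar> \<le> B" using B by blast
    then show ?thesis using periodic_frac[of f, OF assms(2)] by simp
  qed
  then have "bdd_above (range (\<lambda>x. \<bar>f x\<bar>))" by (intro bdd_aboveI[where M=B]) auto
  then show ?thesis unfolding supnorm_def by (rule cSUP_upper[OF UNIV_I])
qed

lemma Cp_abs_le_supnorm:
  assumes "Cp n v"
  shows "\<bar>(deriv ^^ n) v x\<bar> \<le> supnorm ((deriv ^^ n) v)"
  using assms Cp_higher_deriv_periodic[OF assms order_refl]
  by (intro abs_le_supnorm) (simp_all add: Cp_def)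

lemma Cp_higher_deriv_node_diff:
  assumes v: "Cp (n + 1) v" and N: "N \<ge> 1"
  shows "\<bar>(deriv ^^ n) v (node N j) - (deriv ^^ n) v (node N (j - 1))\<bar> \<le> supnorm ((deriv ^^ (n + 1)) v) * (1 / real N)"
proof -
  let ?g = "(deriv ^^ n) v"
  have "\<bar>?g (node N (j - 1) + 1 / real N) - (\<Sum>i<1. (deriv ^^ i) ?g (node N (j - 1)) / fact i * (1 / real N) ^ i)\<bar>
      \<le> supnorm ((deriv ^^ (n + 1)) v) * (1 / real N) ^ 1 / fact 1"
  proof (rule taylor_remainder_bound)
    show "((deriv ^^ i) ?g has_real_derivative (deriv ^^ Suc i) ?g x) (at x)" if "i < 1" for i x
      using v that by (simp add: Cp_def)
    show "\<bar>(deriv ^^ 1) ?g x\<bar> \<le> supnorm ((deriv ^^ (n + 1)) v)" for x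
      using Cp_abs_le_supnorm[OF v, of x] by simp
  qed simp_all
  moreover have "node N (j - 1) + 1 / real N = node N j"
    using N by (simp add: node_def field_simps)
  ultimately show ?thesis by simp
qed

lemma interp_defect_elem_pt_expansion:
  assumes k: "k \<ge> 1" "odd k" and v: "Cp (k + 2) v" and w: "w = psi k \<or> w = (\<lambda>s. psi k (1 - s))"
    and P: "\<forall>s\<in>{0..1}. \<bar>psi k s\<bar> \<le> P"
  shows "\<bar>interp_defect k w (\<lambda>s. v (elem_pt N m s))
      - interp_defect k (psi k) (\<lambda>s. s ^ (k + 1)) * ((deriv ^^ (k + 1)) v (node N (m - 1)) / fact (k + 1) * (1 / real N) ^ (k + 1))\<bar>
    \<le> (1 + 2 * P / \<bar>psi k 1\<bar>) * P * (supnorm ((deriv ^^ (k + 2)) v) * (1 / real N) ^ (k + 2) / fact (k + 2))"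
proof -
  have "(\<lambda>s. v (elem_pt N m s)) = (\<lambda>s. v (node N (m - 1) + 1 / real N * s))"
    by (simp add: elem_pt_eq)
  moreover have "interp_defect k w (\<lambda>s. s ^ (k + 1)) = interp_defect k (psi k) (\<lambda>s. s ^ (k + 1))"
    using w interp_defect_monomial_reflect[OF k] by auto
  moreover have "((deriv ^^ j) v has_real_derivative (deriv ^^ Suc j) v x) (at x)" if "j < k + 2" for j x
    using v that by (simp add: Cp_def)
  ultimately show ?thesis
    using interp_defect_taylor[OF k(1) w _ Cp_abs_le_supnorm[OF v] _ P, where y="node N (m - 1)" and h="1 / real N"]
    by (simp only:) simp
qed

lemma integral_ell_elem:
  fixes f :: "real \<Rightarrow> real"
  assumes N: "N \<ge> 1" and f: "continuous_on UNIV f"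
  shows "integral {node N (int i - 1)..node N (int i)} (\<lambda>x. f x * ell N k i x)
       = elem_moment N (psi k) f (int i) / real N"
proof -
  let ?a = "node N (int i - 1)" and ?b = "node N (int i)"
  let ?g = "\<lambda>x. f x * psi k ((x - ?a) * real N)"
  have b: "?b = ?a + 1 / real N" using N by (simp add: node_def field_simps)
  have "integral {?a..?b} (\<lambda>x. f x * ell N k i x) = integral {?a..?b} ?g"
  proof (rule integral_spike[of "{?b}"])
    fix x assume "x \<in> {?a..?b} - {?b}"
    then have t: "0 \<le> x - ?a" "x - ?a < 1 / real N" using b by auto
    moreover have "1 / real N \<le> 1" using N by simp
    ultimately have "frac (x - ?a) = x - ?a" by (simp add: frac_eq)
    then show "?g x = f x * ell N k i x" using t by (simp add: ell_def Let_def)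
  qed simp
  also have "\<dots> = integral {0..1} (\<lambda>s. ?g (elem_pt N (int i) s)) / real N"
    by (rule integral_elem[OF N]) (auto intro!: continuous_intros continuous_on_subset[OF f])
  also have "integral {0..1} (\<lambda>s. ?g (elem_pt N (int i) s)) = elem_moment N (psi k) f (int i)"
    unfolding elem_moment_def using N by (intro integral_cong) (simp add: elem_pt_eq)
  finally show ?thesis .
qed

lemma elem_moment_eq_interp_defect:
  fixes N :: nat
  assumes k: "k \<ge> 1" and v: "continuous_on UNIV v"
  defines "t \<equiv> \<lambda>j. v (node N j) / psi k 1"
  shows "elem_moment N (psi k) v m =
      interp_defect k (psi k) (\<lambda>s. v (elem_pt N m s)) + psi_mass k * t m + psi_cross_mass k * t (m - 1)"
    and "elem_moment N (\<lambda>s. psi k (1 - s)) v m =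
      interp_defect k (\<lambda>s. psi k (1 - s)) (\<lambda>s. v (elem_pt N m s)) + psi_cross_mass k * t m + psi_mass k * t (m - 1)"
proof -
  have cv: "continuous_on {0..1} (\<lambda>s. v (elem_pt N m s))"
    by (intro continuous_intros continuous_on_compose2[OF v]) auto
  show "elem_moment N (psi k) v m =
      interp_defect k (psi k) (\<lambda>s. v (elem_pt N m s)) + psi_mass k * t m + psi_cross_mass k * t (m - 1)"
    using interp_defect_eq[OF k cv, of "psi k"]
    by (simp add: elem_moment_def elem_pt_0 elem_pt_1 t_def psi_mass_def psi_cross_mass_def mult.commute
        continuous_intros)
  show "elem_moment N (\<lambda>s. psi k (1 - s)) v m =
      interp_defect k (\<lambda>s. psi k (1 - s)) (\<lambda>s. v (elem_pt N m s)) + psi_cross_mass k * t m + psi_mass k * t (m - 1)"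
    using interp_defect_eq[OF k cv, of "\<lambda>s. psi k (1 - s)"]
    by (simp add: elem_moment_def elem_pt_0 elem_pt_1 t_def psi_reflected_mass psi_cross_mass_def
        continuous_intros)
qed

text \<open>With \<open>e\<^sub>j = c\<^sub>j - v(x\<^sub>j) / \<psi>(1)\<close> the nodal error of \<open>\<pi>\<^sub>1 v = \<Sum>\<^sub>j c\<^sub>j \<ell>\<^sub>j\<close>, both the projection equations
  and the target moment involve \<open>v\<close> only through the interpolation defects on the elements.\<close>

lemma pi1_error_equation:
  assumes k: "k \<ge> 1" and N: "N \<ge> 1" and v: "continuous_on UNIV v" "\<And>x. v (x + 1) = v x"
  obtains e where "periodic_seq N e"
    and "\<And>j. 2 * psi_mass k * e j + psi_cross_mass k * (e (j - 1) + e (j + 1)) =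
      interp_defect k (psi k) (\<lambda>s. v (elem_pt N j s))
      + interp_defect k (\<lambda>s. psi k (1 - s)) (\<lambda>s. v (elem_pt N (j + 1) s))"
    and "\<And>i. integral {node N (int i - 1)..node N (int i)} (\<lambda>x. (pi1 N k v x - v x) * ell N k i x) =
      (psi_mass k * e (int i) + psi_cross_mass k * e (int i - 1)
       - interp_defect k (psi k) (\<lambda>s. v (elem_pt N (int i) s))) / real N"
proof -
  let ?a = "psi_mass k" and ?b = "psi_cross_mass k"
  let ?A = "elem_moment N (psi k)" and ?B = "elem_moment N (\<lambda>s. psi k (1 - s))"
  let ?\<Lambda> = "\<lambda>w m. interp_defect k w (\<lambda>s. v (elem_pt N m s))"
  obtain c where c: "periodic_seq N c"
    and sys: "\<And>j. 2 * ?a * c j + ?b * (c (j - 1) + c (j + 1)) = ?A v j + ?B v (j + 1)"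
    and pi1: "pi1 N k v = psi_spline N k c"
    using pi1_eq_psi_spline[OF k N v] by blast
  define t where "t j = v (node N j) / psi k 1" for j
  define e where "e j = c j - t j" for j
  note A = elem_moment_eq_interp_defect(1)[OF k v(1), where N=N, folded t_def]
  note B = elem_moment_eq_interp_defect(2)[OF k v(1), where N=N, folded t_def]
  have "node N (j + int N) = node N j + 1" for j using N by (simp add: node_def field_simps)
  then have "periodic_seq N e" using c v(2) by (simp add: periodic_seq_def e_def t_def)
  moreover have "2 * ?a * e j + ?b * (e (j - 1) + e (j + 1)) = ?\<Lambda> (psi k) j + ?\<Lambda> (\<lambda>s. psi k (1 - s)) (j + 1)" for j
    using sys[of j] A[of j] B[of "j + 1"] by (simp add: e_def algebra_simps)
  moreover have "integral {node N (int i - 1)..node N (int i)} (\<lambda>x. (pi1 N k v x - v x) * ell N k i x) =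
      (?a * e (int i) + ?b * e (int i - 1) - ?\<Lambda> (psi k) (int i)) / real N" for i
  proof -
    have S: "continuous_on UNIV (psi_spline N k c)" by (rule continuous_on_psi_spline[OF k N])
    have w: "continuous_on {0..1} (psi k)" by (intro continuous_intros)
    have "integral {node N (int i - 1)..node N (int i)} (\<lambda>x. (pi1 N k v x - v x) * ell N k i x)
        = (?A (psi_spline N k c) (int i) - ?A v (int i)) / real N"
      unfolding pi1 using elem_moment_diff[OF S v(1) w]
      by (subst integral_ell_elem[OF N]) (auto intro: continuous_intros S v(1))
    then show ?thesis
      using A[of "int i"] elem_moment_psi_spline(1)[OF k N, of c "int i"] by (simp add: e_def algebra_simps)
  qed
  ultimately show ?thesis by (rule that)
qed

lemma nodal_error_bound:
  assumes k: "k \<ge> 1" "odd k" and v: "Cp (k + 2) v" and N: "N \<ge> 1"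
    and P: "\<forall>s\<in>{0..1}. \<bar>psi k s\<bar> \<le> P"
  defines "a \<equiv> psi_mass k" and "b \<equiv> psi_cross_mass k"
    and "\<Lambda> \<equiv> \<lambda>w m. interp_defect k w (\<lambda>s. v (elem_pt N m s))"
    and "\<mu> \<equiv> interp_defect k (psi k) (\<lambda>s. s ^ (k + 1))"
    and "L \<equiv> (1 + 2 * P / \<bar>psi k 1\<bar>) * P"
  assumes e: "periodic_seq N e"
    and sys: "\<And>j. 2 * a * e j + b * (e (j - 1) + e (j + 1)) = \<Lambda> (psi k) j + \<Lambda> (\<lambda>s. psi k (1 - s)) (j + 1)"
  shows "\<bar>a * e i + b * e (i - 1) - \<Lambda> (psi k) i\<bar>
    \<le> 2 * a * (a + \<bar>b\<bar>) / ((a - \<bar>b\<bar>) * (a + b)) * (\<bar>\<mu>\<bar> / fact (k + 1) + L / fact (k + 2))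
      * (1 / real N) ^ (k + 2) * supnorm ((deriv ^^ (k + 2)) v)"
proof -
  define h where "h = 1 / real N"
  define S where "S = supnorm ((deriv ^^ (k + 2)) v)"
  define G where "G = \<mu> / fact (k + 1) * h ^ (k + 1)"
  define g where "g j = G * (deriv ^^ (k + 1)) v (node N j)" for j
  define E where "E = L * (S * h ^ (k + 2) / fact (k + 2))"
  have "node N (j + int N) = node N j + 1" for j using N by (simp add: node_def field_simps)
  then have g: "periodic_seq N g"
    using Cp_higher_deriv_periodic[OF v, of "k + 1"] by (simp add: periodic_seq_def g_def)
  have \<epsilon>: "\<bar>\<Lambda> w m - g (m - 1)\<bar> \<le> E" if "w = psi k \<or> w = (\<lambda>s. psi k (1 - s))" for w m
    using interp_defect_elem_pt_expansion[OF k v that P, of N m]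
    unfolding \<Lambda>_def E_def L_def S_def h_def g_def G_def \<mu>_def by (simp add: mult_ac)
  have \<delta>: "\<bar>g j - g (j - 1)\<bar> \<le> \<bar>G\<bar> * (S * h)" for j
    unfolding g_def right_diff_distrib[symmetric] abs_mult
    using Cp_higher_deriv_node_diff[of "k + 1" v N j] v N by (intro mult_left_mono) (simp_all add: S_def h_def)
  have "\<bar>a * e i + b * e (i - 1) - g (i - 1) - (\<Lambda> (psi k) i - g (i - 1))\<bar>
      \<le> 2 * a * (a + \<bar>b\<bar>) / ((a - \<bar>b\<bar>) * (a + b)) * (\<bar>G\<bar> * (S * h) + E)"
  proof (rule periodic_three_term_defect_bound[OF N _ e g _ _ _ \<delta>])
    show "\<bar>b\<bar> < a" unfolding a_def b_def by (rule abs_psi_cross_mass_less[OF k(1)])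
    show "2 * a * e j + b * (e (j - 1) + e (j + 1)) = g (j - 1) + g j
        + (\<Lambda> (psi k) j - g (j - 1)) + (\<Lambda> (\<lambda>s. psi k (1 - s)) (j + 1) - g j)" for j
      using sys[of j] by simp
    show "\<bar>\<Lambda> (psi k) j - g (j - 1)\<bar> \<le> E" for j using \<epsilon> by blast
    show "\<bar>\<Lambda> (\<lambda>s. psi k (1 - s)) (j + 1) - g j\<bar> \<le> E" for j using \<epsilon>[of _ "j + 1"] by simp
  qed
  moreover have "\<bar>G\<bar> * (S * h) + E = (\<bar>\<mu>\<bar> / fact (k + 1) + L / fact (k + 2)) * h ^ (k + 2) * S"
    by (simp add: G_def E_def h_def abs_mult algebra_simps)
  ultimately show ?thesis by (simp add: add_diff_eq h_def S_def mult_ac)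
qed

lemma pi1_elem_error_bound:
  assumes k: "k \<ge> 1" "odd k" and v: "Cp (k + 2) v" and N: "N \<ge> 1"
    and P: "\<forall>s\<in>{0..1}. \<bar>psi k s\<bar> \<le> P"
  defines "a \<equiv> psi_mass k" and "b \<equiv> psi_cross_mass k"
    and "\<mu> \<equiv> interp_defect k (psi k) (\<lambda>s. s ^ (k + 1))"
    and "L \<equiv> (1 + 2 * P / \<bar>psi k 1\<bar>) * P"
  shows "\<bar>integral {node N (int i - 1)..node N (int i)} (\<lambda>x. (pi1 N k v x - v x) * ell N k i x)\<bar>
    \<le> 2 * a * (a + \<bar>b\<bar>) / ((a - \<bar>b\<bar>) * (a + b)) * (\<bar>\<mu>\<bar> / fact (k + 1) + L / fact (k + 2))
      * (1 / real N) ^ (k + 3) * supnorm ((deriv ^^ (k + 2)) v)"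
proof -
  have cv: "continuous_on UNIV v" and pv: "\<And>x. v (x + 1) = v x"
    using v by (simp_all add: Cp_def)
  obtain e where e: "periodic_seq N e"
    and sys: "\<And>j. 2 * a * e j + b * (e (j - 1) + e (j + 1)) =
      interp_defect k (psi k) (\<lambda>s. v (elem_pt N j s))
      + interp_defect k (\<lambda>s. psi k (1 - s)) (\<lambda>s. v (elem_pt N (j + 1) s))"
    and target: "\<And>i. integral {node N (int i - 1)..node N (int i)} (\<lambda>x. (pi1 N k v x - v x) * ell N k i x) =
      (a * e (int i) + b * e (int i - 1) - interp_defect k (psi k) (\<lambda>s. v (elem_pt N (int i) s))) / real N"
    unfolding a_def b_def by (fact pi1_error_equation[OF k(1) N cv pv])
  from nodal_error_bound[OF k v N P e[unfolded a_def b_def] sys[unfolded a_def b_def], of "int i"]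
  have "\<bar>a * e (int i) + b * e (int i - 1) - interp_defect k (psi k) (\<lambda>s. v (elem_pt N (int i) s))\<bar> * (1 / real N)
      \<le> 2 * a * (a + \<bar>b\<bar>) / ((a - \<bar>b\<bar>) * (a + b)) * (\<bar>\<mu>\<bar> / fact (k + 1) + L / fact (k + 2))
        * (1 / real N) ^ (k + 2) * supnorm ((deriv ^^ (k + 2)) v) * (1 / real N)"
    unfolding a_def b_def \<mu>_def L_def by (rule mult_right_mono) simp
  then show ?thesis
    unfolding target by (simp add: abs_divide power_add power2_eq_square power3_eq_cube mult_ac)
qed

theorem lemma2p7:
  fixes \<kappa> k :: nat and v :: "real \<Rightarrow> real"
  assumes "k = 2 * \<kappa> + 1"
    and "Cp (k + 2) v"
  shows "\<exists>C>0. \<forall>N::nat. N \<ge> 1 \<longrightarrow>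
    (\<forall>i\<in>{1..N}.
      \<bar>integral {node N (int i - 1)..node N (int i)}
          (\<lambda>x. (pi1 N k v x - v x) * ell N k i x)\<bar>
      \<le> C * (1 / real N) ^ (k + 3) * supnorm ((deriv ^^ (k + 2)) v))"
proof -
  have k: "k \<ge> 1" "odd k" using assms(1) by auto
  obtain P where P: "P > 0" "\<forall>s\<in>{0..1}. \<bar>psi k s\<bar> \<le> P" using psi_bounded by blast
  define a where "a = psi_mass k"
  define b where "b = psi_cross_mass k"
  define L where "L = (1 + 2 * P / \<bar>psi k 1\<bar>) * P"
  define C where "C = 2 * a * (a + \<bar>b\<bar>) / ((a - \<bar>b\<bar>) * (a + b))
    * (\<bar>interp_defect k (psi k) (\<lambda>s. s ^ (k + 1))\<bar> / fact (k + 1) + L / fact (k + 2))"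
  have "\<bar>b\<bar> < a" unfolding a_def b_def by (rule abs_psi_cross_mass_less[OF k(1)])
  then have M: "2 * a * (a + \<bar>b\<bar>) / ((a - \<bar>b\<bar>) * (a + b)) > 0" by simp
  have "L > 0" using P psi_1_neq_0[OF k(1)] by (simp add: L_def add_pos_nonneg)
  then have "\<bar>interp_defect k (psi k) (\<lambda>s. s ^ (k + 1))\<bar> / fact (k + 1) + L / fact (k + 2) > 0"
    by (intro add_nonneg_pos) simp_all
  with M have "C > 0" unfolding C_def by (rule mult_pos_pos)
  moreover have "\<bar>integral {node N (int i - 1)..node N (int i)} (\<lambda>x. (pi1 N k v x - v x) * ell N k i x)\<bar>
      \<le> C * (1 / real N) ^ (k + 3) * supnorm ((deriv ^^ (k + 2)) v)" if "N \<ge> 1" for N i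
    using pi1_elem_error_bound[OF k assms(2) that P(2)] unfolding C_def a_def b_def L_def .
  ultimately show ?thesis by blast
qed

end
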